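(* Let $\mathcal{H}_A,\mathcal{H}_B$ be finite-dimensional Hilbert spaces, let $|\Psi\rangle,|\Phi\rangle\in\mathcal{H}_A\otimes\mathcal{H}_B$ be unit vectors, and let $\alpha,\beta\in\mathbb{C}$ be such that $|\Gamma\rangle=\alpha|\Psi\rangle+\beta|\Phi\rangle$ is a unit vector (no condition on $|\alpha|^2+|\beta|^2$ is imposed). Then for every $t\in(0,1)$, $$E(\Gamma)\ge\max\{L_1(t),L_2(t)\},$$ where $$L_1(t)=\frac{(1-t)|\beta|^2}{1-t(1-|\alpha|^2)}E(\Phi)-\frac{1-t}{t}E(\Psi)-\frac{1}{t}h_2(t),$$ $$L_2(t)=\frac{(1-t)|\alpha|^2}{1-t(1-|\beta|^2)}E(\Psi)-\frac{1-t}{t}E(\Phi)-\frac{1}{t}h_2(t).$$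
   Context: $S(\rho)=-\mathrm{Tr}(\rho\log\rho)$ is the von Neumann entropy (logarithm base 2). For a unit vector $|\chi\rangle\in\mathcal{H}_A\otimes\mathcal{H}_B$, its entanglement is $E(\chi)=S(\mathrm{Tr}_B|\chi\rangle\langle\chi|)$. $h_2(x)=-x\log x-(1-x)\log(1-x)$ is the binary entropy function. *)

theory Defs
  imports "Jordan_Normal_Form.Char_Poly" "HOL-Computational_Algebra.Fundamental_Theorem_Algebra"
begin

(* A vector of H_A \<otimes> H_B with dim H_A = dA, dim H_B = dB is a complex vector of
   dimension dA*dB; the basis vector |i>|j> has index i*dB + j. *)

definition sq_norm_vec :: "complex vec \<Rightarrow> real" where
  "sq_norm_vec v = (\<Sum>i<dim_vec v. (cmod (v $ i))\<^sup>2)"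

definition unit_vec :: "complex vec \<Rightarrow> bool" where
  "unit_vec v \<longleftrightarrow> sq_norm_vec v = 1"

definition ket_bra :: "complex vec \<Rightarrow> complex mat" where
  "ket_bra v = mat (dim_vec v) (dim_vec v) (\<lambda>(i,j). v $ i * cnj (v $ j))"

definition partial_trace_B :: "nat \<Rightarrow> nat \<Rightarrow> complex mat \<Rightarrow> complex mat" where
  "partial_trace_B dA dB \<rho> =
     mat dA dA (\<lambda>(i,i'). \<Sum>j<dB. \<rho> $$ (i*dB + j, i'*dB + j))"

definition xlogx :: "real \<Rightarrow> real" where
  "xlogx x = (if x \<le> 0 then 0 else x * log 2 x)"

(* von Neumann entropy -Tr(rho log2 rho) = - sum over eigenvalues (with multiplicity) of
   lambda log2 lambda; for a density matrix all eigenvalues are real and nonnegative *)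
definition vn_entropy :: "complex mat \<Rightarrow> real" where
  "vn_entropy \<rho> = - (\<Sum>ev\<in>#proots (char_poly \<rho>). xlogx (Re ev))"

definition entanglement :: "nat \<Rightarrow> nat \<Rightarrow> complex vec \<Rightarrow> real" where
  "entanglement dA dB v = vn_entropy (partial_trace_B dA dB (ket_bra v))"

definition h2 :: "real \<Rightarrow> real" where
  "h2 x = - x * log 2 x - (1 - x) * log 2 (1 - x)"

end

theory Submission
  imports Defs "Jordan_Normal_Form.Schur_Decomposition"
begin

(* Write rho_X = Tr_B |X><X| and Gamma = alpha Psi + beta Phi, and fix t in (0,1).  The bound
   L_1(t) follows from two estimates on the entropy of the mixture omega = t rho_Gamma + (1-t) rho_Psi:
   (1) S(omega) <= t S(rho_Gamma) + (1-t) S(rho_Psi) + h2(t): omega is the ensemble of the 2n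
       vectors sqrt(t l_r) u_r, sqrt((1-t) l'_r) u'_r built from the eigen-decompositions, and the
       spectrum of an ensemble is majorised by its weights (Gram-matrix argument);
   (2) S(omega) >= q S(rho_Phi) with q = t(1-t)|beta|^2 / (1 - t(1-|alpha|^2)): pointwise,
       q |<x|Phi>|^2 <= t |<x|Gamma>|^2 + (1-t) |<x|Psi>|^2 (an elementary inequality), so omega
       dominates q rho_Phi as a quadratic form, and then x log x convexity and Schur concavity apply.
   Together t E(Gamma) >= q E(Phi) - (1-t) E(Psi) - h2(t); L_2(t) is L_1(t) with the two states
   exchanged. *)

lemma sum_delta_mult: "k < (n::nat) \<Longrightarrow> (\<Sum>s<n. f s * (if s = k then 1 else 0)) = (f k :: complex)"
  by (simp add: if_distrib sum.delta' cong: if_cong)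

lemma sum_swap3:
  "(\<Sum>k<n. \<Sum>i<n'. \<Sum>j<n''. F k i j) = (\<Sum>i<n'. \<Sum>j<n''. \<Sum>k<n. (F k i j :: complex))"
  by (subst sum.swap, rule sum.cong[OF refl], rule sum.swap)

lemma sum_prod3:
  "(\<Sum>p<N. (\<Sum>i<n. a p i) * (\<Sum>j<n'. b p j)) = (\<Sum>i<n. \<Sum>j<n'. \<Sum>p<N. (a p i * b p j :: complex))"
proof -
  have "(\<Sum>p<N. (\<Sum>i<n. a p i) * (\<Sum>j<n'. b p j)) = (\<Sum>p<N. \<Sum>i<n. \<Sum>j<n'. a p i * b p j)"
    by (simp add: sum_product)
  also have "\<dots> = (\<Sum>i<n. \<Sum>j<n'. \<Sum>p<N. a p i * b p j)" by (rule sum_swap3)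
  finally show ?thesis .
qed

lemma sum_lessThan_add:
  "(\<Sum>l<(a::nat) + b. f l) = (\<Sum>l<a. f l) + (\<Sum>j<b. f (a + j) :: 'a :: comm_monoid_add)"
  by (induction b) (simp_all add: add.assoc)

definition orthonormal_cols :: "nat \<Rightarrow> (nat \<Rightarrow> nat \<Rightarrow> complex) \<Rightarrow> bool" where
  "orthonormal_cols n u \<longleftrightarrow>
     (\<forall>r<n. \<forall>s<n. (\<Sum>k<n. cnj (u k r) * u k s) = (if r = s then 1 else 0))"

definition orthonormal_rows :: "nat \<Rightarrow> (nat \<Rightarrow> nat \<Rightarrow> complex) \<Rightarrow> bool" where
  "orthonormal_rows n u \<longleftrightarrow>
     (\<forall>k<n. \<forall>l<n. (\<Sum>r<n. u k r * cnj (u l r)) = (if k = l then 1 else 0))"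

lemma orthonormal_cols_rows:
  assumes "orthonormal_cols n u" shows "orthonormal_rows n u"
proof -
  define U :: "complex mat" where "U = mat n n (\<lambda>(i,j). u i j)"
  define Uh :: "complex mat" where "Uh = mat n n (\<lambda>(i,j). cnj (u j i))"
  have U: "U \<in> carrier_mat n n" and Uh: "Uh \<in> carrier_mat n n" unfolding U_def Uh_def by auto
  have "Uh * U = 1\<^sub>m n"
  proof (rule eq_matI)
    fix i j assume i: "i < dim_row (1\<^sub>m n)" and j: "j < dim_col (1\<^sub>m n)"
    hence "(Uh * U) $$ (i,j) = (\<Sum>k<n. cnj (u k i) * u k j)"
      unfolding U_def Uh_def by (auto simp: scalar_prod_def lessThan_atLeast0 intro!: sum.cong)
    also have "\<dots> = 1\<^sub>m n $$ (i,j)" using assms i j unfolding orthonormal_cols_def by auto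
    finally show "(Uh * U) $$ (i,j) = 1\<^sub>m n $$ (i,j)" .
  qed (auto simp: U_def Uh_def)
  hence UU: "U * Uh = 1\<^sub>m n" by (rule mat_mult_left_right_inverse[OF Uh U])
  show ?thesis unfolding orthonormal_rows_def
  proof (intro allI impI)
    fix k l assume k: "k < n" and l: "l < n"
    have "(\<Sum>r<n. u k r * cnj (u l r)) = (U * Uh) $$ (k,l)"
      using k l unfolding U_def Uh_def by (auto simp: scalar_prod_def lessThan_atLeast0 intro!: sum.cong)
    thus "(\<Sum>r<n. u k r * cnj (u l r)) = (if k = l then 1 else 0)" using UU k l by simp
  qed
qed

lemma orthonormal_cols_norm: "orthonormal_cols n u \<Longrightarrow> r < n \<Longrightarrow> (\<Sum>i<n. (cmod (u i r))\<^sup>2) = 1"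
proof -
  assume u: "orthonormal_cols n u" and r: "r < n"
  have "complex_of_real (\<Sum>i<n. (cmod (u i r))\<^sup>2) = (\<Sum>i<n. cnj (u i r) * u i r)"
    unfolding of_real_sum complex_norm_square by (simp add: mult.commute)
  also have "\<dots> = 1" using u r unfolding orthonormal_cols_def by auto
  finally show ?thesis by (metis of_real_eq_1_iff)
qed

lemma orthonormal_completion:
  fixes x :: "nat \<Rightarrow> complex"
  assumes n: "n > 0" and x: "(\<Sum>k<n. (cmod (x k))\<^sup>2) = 1"
  shows "\<exists>w. orthonormal_cols n w \<and> (\<forall>k<n. w k 0 = x k)"
proof -
  define v where "v = vec n x"
  have v: "v \<in> carrier_vec n" unfolding v_def by auto
  have v0: "v \<noteq> 0\<^sub>v n"
  proof
    assume "v = 0\<^sub>v n"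
    hence "\<forall>k<n. x k = 0" unfolding v_def by (metis index_vec index_zero_vec(1))
    thus False using x by simp
  qed
  interpret cof_vec_space n "TYPE(complex)" .
  define b where "b = basis_completion v"
  from basis_completion[OF v v0, folded b_def]
  have dist_b: "distinct b" and indep: "\<not> lin_dep (set b)" and bc: "set b \<subseteq> carrier_vec n"
    and hdb: "hd b = v" and len_b: "length b = n" by auto
  from hdb len_b n obtain vs where bv: "b = v # vs" by (cases b, auto)
  define ws where "ws = gram_schmidt n b"
  from gram_schmidt_result[OF bc dist_b indep refl, folded ws_def]
  have ws: "set ws \<subseteq> carrier_vec n" "corthogonal ws" "length ws = n" by (auto simp: len_b)
  from gram_schmidt_hd[OF v, of vs, folded bv] have "hd ws = v" unfolding ws_def .
  hence ws0: "ws ! 0 = v" using ws(3) n by (cases ws, auto)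
  define nv where "nv = (\<lambda>w::complex vec. sqrt (\<Sum>k<n. (cmod (w $ k))\<^sup>2))"
  define w where "w = (\<lambda>k r. ws ! r $ k / complex_of_real (nv (ws ! r)))"
  have wsc: "ws ! r \<in> carrier_vec n" if "r < n" for r using ws that by (metis nth_mem subsetD)
  have inner: "(\<Sum>k<n. ws ! r $ k * cnj (ws ! s $ k)) = (ws ! r) \<bullet>c (ws ! s)"
    if "s < n" for r s
    using that wsc[of s] by (auto simp: scalar_prod_def lessThan_atLeast0 intro!: sum.cong)
  have self: "(ws ! s) \<bullet>c (ws ! s) = complex_of_real ((nv (ws ! s))\<^sup>2)" if s: "s < n" for s
  proof -
    have "(ws ! s) \<bullet>c (ws ! s) = (\<Sum>k<n. ws ! s $ k * cnj (ws ! s $ k))" using inner[OF s] by simp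
    also have "\<dots> = complex_of_real (\<Sum>k<n. (cmod (ws ! s $ k))\<^sup>2)"
      by (subst of_real_sum, rule sum.cong, auto simp: complex_mult_cnj cmod_power2)
    finally show ?thesis unfolding nv_def by (simp add: sum_nonneg)
  qed
  have nv0: "nv (ws ! s) \<noteq> 0" if s: "s < n" for s
  proof
    assume "nv (ws ! s) = 0"
    hence "(ws ! s) \<bullet>c (ws ! s) = 0" using self[OF s] by simp
    thus False using ws s by (auto simp: corthogonal_def)
  qed
  have orth: "orthonormal_cols n w" unfolding orthonormal_cols_def
  proof (intro allI impI)
    fix r s assume r: "r < n" and s: "s < n"
    have "(\<Sum>k<n. cnj (w k r) * w k s) =
      (ws ! s) \<bullet>c (ws ! r) / (complex_of_real (nv (ws ! r)) * complex_of_real (nv (ws ! s)))"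
      unfolding w_def inner[OF r, symmetric] by (simp add: sum_divide_distrib algebra_simps)
    moreover have "(ws ! s) \<bullet>c (ws ! r) = 0" if "r \<noteq> s" using ws r s that by (auto simp: corthogonal_def)
    ultimately show "(\<Sum>k<n. cnj (w k r) * w k s) = (if r = s then 1 else 0)"
      using self[OF s] nv0[OF s] by (auto simp: power2_eq_square)
  qed
  have "nv v = 1" unfolding nv_def v_def using x by simp
  hence "\<forall>k<n. w k 0 = x k" unfolding w_def ws0 v_def by simp
  with orth show ?thesis by blast
qed

(* Square matrices of dimension n are handled as functions on indices; ftrunc n sets all
   entries outside the n x n block to zero, so identities between products become equations
   of functions. *)

definition ftrunc :: "nat \<Rightarrow> (nat \<Rightarrow> nat \<Rightarrow> complex) \<Rightarrow> nat \<Rightarrow> nat \<Rightarrow> complex" where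
  "ftrunc n A = (\<lambda>i j. if i < n \<and> j < n then A i j else 0)"

definition fmult :: "nat \<Rightarrow> (nat \<Rightarrow> nat \<Rightarrow> complex) \<Rightarrow> (nat \<Rightarrow> nat \<Rightarrow> complex) \<Rightarrow> nat \<Rightarrow> nat \<Rightarrow> complex" where
  "fmult n A B = (\<lambda>i j. if i < n \<and> j < n then (\<Sum>k<n. A i k * B k j) else 0)"

definition fadj :: "(nat \<Rightarrow> nat \<Rightarrow> complex) \<Rightarrow> nat \<Rightarrow> nat \<Rightarrow> complex" where
  "fadj A = (\<lambda>i j. cnj (A j i))"

definition fid :: "nat \<Rightarrow> nat \<Rightarrow> complex" where
  "fid = (\<lambda>i j. if i = j then 1 else 0)"

definition fdiag :: "(nat \<Rightarrow> real) \<Rightarrow> nat \<Rightarrow> nat \<Rightarrow> complex" where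
  "fdiag d = (\<lambda>i j. if i = j then complex_of_real (d i) else 0)"

lemma fmult_assoc: "fmult n (fmult n A B) C = fmult n A (fmult n B C)"
proof (intro ext)
  fix i j
  show "fmult n (fmult n A B) C i j = fmult n A (fmult n B C) i j"
  proof (cases "i < n \<and> j < n")
    case True
    have "fmult n (fmult n A B) C i j = (\<Sum>k<n. \<Sum>l<n. A i l * B l k * C k j)"
      using True unfolding fmult_def by (auto intro!: sum.cong simp: sum_distrib_right)
    also have "\<dots> = (\<Sum>l<n. \<Sum>k<n. A i l * B l k * C k j)" by (rule sum.swap)
    also have "\<dots> = fmult n A (fmult n B C) i j"
      using True unfolding fmult_def by (auto intro!: sum.cong simp: sum_distrib_left mult.assoc)
    finally show ?thesis .
  qed (auto simp: fmult_def)
qed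

lemma fmult_trunc_left [simp]: "fmult n (ftrunc n A) B = fmult n A B"
  unfolding fmult_def ftrunc_def by (auto intro!: ext sum.cong)

lemma fmult_trunc_right [simp]: "fmult n A (ftrunc n B) = fmult n A B"
  unfolding fmult_def ftrunc_def by (auto intro!: ext sum.cong)

lemma fmult_id_left [simp]: "fmult n fid B = ftrunc n B"
proof -
  have "(\<Sum>k<n. (if i = k then 1 else 0) * B k j) = (\<Sum>k<n. if i = k then B k j else 0)" for i j
    by (rule sum.cong) auto
  thus ?thesis unfolding fmult_def ftrunc_def fid_def by (auto intro!: ext)
qed

lemma fmult_id_right [simp]: "fmult n A fid = ftrunc n A"
proof -
  have "(\<Sum>k<n. A i k * (if k = j then 1 else 0)) = (\<Sum>k<n. if k = j then A i k else 0)" for i j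
    by (rule sum.cong) auto
  thus ?thesis unfolding fmult_def ftrunc_def fid_def by (auto intro!: ext)
qed

lemma fadj_fadj [simp]: "fadj (fadj A) = A"
  unfolding fadj_def by auto

lemma fadj_fmult: "fadj (fmult n A B) = fmult n (fadj B) (fadj A)"
  unfolding fadj_def fmult_def by (auto intro!: ext sum.cong simp: mult.commute)

lemma fadj_ftrunc: "fadj (ftrunc n A) = ftrunc n (fadj A)"
  unfolding fadj_def ftrunc_def by (auto intro!: ext)

lemma orthonormal_cols_fmult: "orthonormal_cols n u \<longleftrightarrow> fmult n (fadj u) u = ftrunc n fid"
  unfolding orthonormal_cols_def fmult_def fadj_def ftrunc_def fid_def by (auto simp: fun_eq_iff)

lemma orthonormal_rows_fmult: "orthonormal_rows n u \<longleftrightarrow> fmult n u (fadj u) = ftrunc n fid"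
  unfolding orthonormal_rows_def fmult_def fadj_def ftrunc_def fid_def by (auto simp: fun_eq_iff)

lemma fmult_cancel: "fmult n A B = ftrunc n fid \<Longrightarrow> fmult n A (fmult n B X) = ftrunc n X"
  by (metis fmult_assoc fmult_trunc_left fmult_id_left)

lemma fmult_diag_entry:
  assumes "i < n" "j < n"
  shows "fmult n (fmult n u (fdiag d)) (fadj u) i j =
           (\<Sum>r<n. complex_of_real (d r) * u i r * cnj (u j r))"
proof -
  have "(\<Sum>k<n. u i k * (if k = r then complex_of_real (d k) else 0)) = u i r * d r" if "r < n" for r
    using that by (simp add: if_distrib sum.delta' cong: if_cong)
  thus ?thesis using assms unfolding fmult_def fdiag_def fadj_def
    by (auto intro!: sum.cong simp: mult.commute mult.left_commute)
qed

(* fundamental theorem of algebra: every square complex matrix has a unit eigenvector *)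
lemma unit_eigenvector_exists:
  fixes a :: "nat \<Rightarrow> nat \<Rightarrow> complex"
  assumes n: "n > 0"
  shows "\<exists>e x. (\<Sum>k<n. (cmod (x k))\<^sup>2) = 1 \<and> (\<forall>k<n. (\<Sum>l<n. a k l * x l) = e * x k)"
proof -
  define A :: "complex mat" where "A = mat n n (\<lambda>(i,j). a i j)"
  have A: "A \<in> carrier_mat n n" unfolding A_def by auto
  obtain as where cp: "char_poly A = (\<Prod>a\<leftarrow>as. [:- a, 1:])" and len: "length as = n"
    using char_poly_factorized[OF A] by blast
  then obtain e rest where as: "as = e # rest" using n by (cases as, auto)
  have "poly (char_poly A) e = 0" unfolding cp as by simp
  hence "eigenvalue A e" using eigenvalue_root_char_poly[OF A] by simp
  then obtain v where "eigenvector A v e" unfolding eigenvalue_def by auto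
  hence v: "v \<in> carrier_vec n" and v0: "v \<noteq> 0\<^sub>v n" and Av: "A *\<^sub>v v = e \<cdot>\<^sub>v v"
    unfolding eigenvector_def using A by auto
  define S where "S = (\<Sum>k<n. (cmod (v $ k))\<^sup>2)"
  obtain k0 where k0: "k0 < n" "v $ k0 \<noteq> 0"
    using v v0 by (metis eq_vecI carrier_vecD index_zero_vec(1,2))
  have "(cmod (v $ k0))\<^sup>2 \<le> S" unfolding S_def by (rule member_le_sum, insert k0, auto)
  moreover have "(cmod (v $ k0))\<^sup>2 > 0" using k0 by auto
  ultimately have S0: "S > 0" by linarith
  define x where "x = (\<lambda>k. v $ k / complex_of_real (sqrt S))"
  have "(\<Sum>k<n. (cmod (x k))\<^sup>2) = (\<Sum>k<n. (cmod (v $ k))\<^sup>2) / S"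
    unfolding x_def sum_divide_distrib using S0 by (intro sum.cong) (auto simp: norm_divide power_divide)
  hence x1: "(\<Sum>k<n. (cmod (x k))\<^sup>2) = 1" using S0 unfolding S_def by simp
  have "(\<Sum>l<n. a k l * x l) = e * x k" if k: "k < n" for k
  proof -
    have "(A *\<^sub>v v) $ k = (\<Sum>l<n. a k l * v $ l)"
      using k v unfolding A_def by (auto simp: scalar_prod_def lessThan_atLeast0 intro!: sum.cong)
    hence "(\<Sum>l<n. a k l * v $ l) = e * v $ k" using Av k v by auto
    thus ?thesis unfolding x_def by (simp add: sum_divide_distrib[symmetric])
  qed
  with x1 show ?thesis by blast
qed

lemma spectral_block_extend:
  fixes a :: "nat \<Rightarrow> nat \<Rightarrow> complex" and e :: real
  assumes first: "\<forall>i<Suc m. a i 0 = (if i = 0 then complex_of_real e else 0)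
                          \<and> a 0 i = (if i = 0 then complex_of_real e else 0)"
    and u': "orthonormal_cols m u'"
    and lower: "ftrunc m (\<lambda>i j. a (Suc i) (Suc j)) = fmult m (fmult m u' (fdiag d')) (fadj u')"
  shows "\<exists>U d. orthonormal_cols (Suc m) U \<and>
                ftrunc (Suc m) a = fmult (Suc m) (fmult (Suc m) U (fdiag d)) (fadj U)"
proof -
  let ?n = "Suc m"
  define U where "U = (\<lambda>i r. if i = 0 then (if r = 0 then 1 else 0)
                              else if r = 0 then 0 else u' (i - 1) (r - 1))"
  define d where "d = (\<lambda>r. if r = 0 then e else d' (r - 1))"
  have "ftrunc ?n a i j = fmult ?n (fmult ?n U (fdiag d)) (fadj U) i j" for i j
  proof (cases "i < ?n \<and> j < ?n")
    case False thus ?thesis unfolding ftrunc_def fmult_def by auto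
  next
    case True
    hence i: "i < ?n" and j: "j < ?n" by auto
    have eq: "fmult ?n (fmult ?n U (fdiag d)) (fadj U) i j =
        complex_of_real (d 0) * U i 0 * cnj (U j 0)
        + (\<Sum>r<m. complex_of_real (d (Suc r)) * U i (Suc r) * cnj (U j (Suc r)))"
      unfolding fmult_diag_entry[OF i j] by (subst sum.lessThan_Suc_shift) simp
    show ?thesis
    proof (cases "i = 0 \<or> j = 0")
      case True thus ?thesis using eq first i j unfolding ftrunc_def U_def d_def by auto
    next
      case False
      then obtain i' j' where ij: "i = Suc i'" "j = Suc j'" by (meson not0_implies_Suc)
      have "ftrunc ?n a i j = ftrunc m (\<lambda>i j. a (Suc i) (Suc j)) i' j'"
        using i j ij unfolding ftrunc_def by auto
      also have "\<dots> = (\<Sum>r<m. complex_of_real (d' r) * u' i' r * cnj (u' j' r))"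
        unfolding lower using fmult_diag_entry i j ij by auto
      finally show ?thesis using eq ij unfolding U_def d_def by simp
    qed
  qed
  moreover have "orthonormal_cols ?n U" unfolding orthonormal_cols_def
  proof (intro allI impI)
    fix r s assume r: "r < ?n" and s: "s < ?n"
    have "(\<Sum>k<?n. cnj (U k r) * U k s) =
        cnj (U 0 r) * U 0 s + (\<Sum>k<m. cnj (U (Suc k) r) * U (Suc k) s)"
      by (subst sum.lessThan_Suc_shift) simp
    also have "\<dots> = (if r = s then 1 else 0)"
      using u' r s unfolding U_def orthonormal_cols_def by (cases r; cases s) auto
    finally show "(\<Sum>k<?n. cnj (U k r) * U k s) = (if r = s then 1 else 0)" .
  qed
  ultimately show ?thesis by blast
qed

lemma unitary_conj_eigvec:
  assumes herm: "fadj (ftrunc n a) = ftrunc n a" and w: "orthonormal_cols n w" and n: "0 < n"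
    and ev: "\<forall>k<n. (\<Sum>l<n. a k l * w l 0) = e * w k 0"
  defines "a' \<equiv> fmult n (fadj w) (fmult n a w)"
  shows "\<forall>i j. cnj (a' j i) = a' i j"
    and "\<forall>i<n. a' i 0 = (if i = 0 then complex_of_real (Re e) else 0)
                \<and> a' 0 i = (if i = 0 then complex_of_real (Re e) else 0)"
proof -
  have "ftrunc n (fadj a) = ftrunc n a" using herm by (simp add: fadj_ftrunc)
  hence "fmult n (fadj a) w = fmult n a w" by (metis fmult_trunc_left)
  hence "fadj a' = a'" unfolding a'_def by (simp add: fadj_fmult fmult_assoc)
  thus a'herm: "\<forall>i j. cnj (a' j i) = a' i j"
    unfolding fadj_def by metis
  have col0: "a' i 0 = (if i = 0 then e else 0)" if i: "i < n" for i
  proof -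
    have "a' i 0 = (\<Sum>k<n. cnj (w k i) * (\<Sum>l<n. a k l * w l 0))"
      unfolding a'_def fmult_def fadj_def using i n by (auto intro!: sum.cong)
    also have "\<dots> = (\<Sum>k<n. cnj (w k i) * (e * w k 0))"
      using ev by (auto intro!: sum.cong)
    also have "\<dots> = e * (\<Sum>k<n. cnj (w k i) * w k 0)"
      by (subst sum_distrib_left, rule sum.cong, auto)
    also have "\<dots> = (if i = 0 then e else 0)" using w i n unfolding orthonormal_cols_def by auto
    finally show ?thesis .
  qed
  have "cnj e = e" using a'herm col0[OF n] by metis
  hence "complex_of_real (Re e) = e" by (simp add: complex_eq_iff)
  thus "\<forall>i<n. a' i 0 = (if i = 0 then complex_of_real (Re e) else 0)
                \<and> a' 0 i = (if i = 0 then complex_of_real (Re e) else 0)"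
    using a'herm col0 by (metis complex_cnj_zero)
qed

lemma spectral_unitary_conj:
  assumes w: "orthonormal_cols n w" and U: "orthonormal_cols n U"
    and dec: "ftrunc n (fmult n (fadj w) (fmult n a w)) = fmult n (fmult n U (fdiag d)) (fadj U)"
  shows "orthonormal_cols n (fmult n w U) \<and>
           ftrunc n a = fmult n (fmult n (fmult n w U) (fdiag d)) (fadj (fmult n w U))"
proof -
  have ww: "fmult n (fadj w) w = ftrunc n fid" using w orthonormal_cols_fmult by auto
  have ww': "fmult n w (fadj w) = ftrunc n fid"
    using orthonormal_cols_rows[OF w] orthonormal_rows_fmult by auto
  have "fmult n (fadj (fmult n w U)) (fmult n w U) = fmult n (fadj U) (fmult n (fadj w) (fmult n w U))"
    by (simp add: fadj_fmult fmult_assoc)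
  also have "\<dots> = ftrunc n fid" using U fmult_cancel[OF ww] orthonormal_cols_fmult by simp
  finally have "orthonormal_cols n (fmult n w U)" using orthonormal_cols_fmult by auto
  moreover have "fmult n (fmult n w (fmult n (fadj w) (fmult n a w))) (fadj w) =
      fmult n w (fmult n (fadj w) (fmult n a (fmult n w (fadj w))))"
    by (simp add: fmult_assoc)
  hence "ftrunc n a = fmult n (fmult n w (ftrunc n (fmult n (fadj w) (fmult n a w)))) (fadj w)"
    unfolding ww' using fmult_cancel[OF ww'] by simp
  hence "ftrunc n a = fmult n (fmult n (fmult n w U) (fdiag d)) (fadj (fmult n w U))"
    unfolding dec by (simp add: fadj_fmult fmult_assoc)
  ultimately show ?thesis by blast
qed

(* spectral theorem for Hermitian matrices, in product form A = U D U^*: deflate by a unit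
   eigenvector and diagonalise the remaining block by induction *)
lemma spectral_fmult:
  "fadj (ftrunc n a) = ftrunc n a \<Longrightarrow>
     \<exists>u d. orthonormal_cols n u \<and> ftrunc n a = fmult n (fmult n u (fdiag d)) (fadj u)"
proof (induction n arbitrary: a)
  case 0
  show ?case
    by (rule exI[of _ "\<lambda>_ _. 0"], rule exI[of _ "\<lambda>_. 0"])
       (auto simp: orthonormal_cols_def ftrunc_def fmult_def intro!: ext)
next
  case (Suc m)
  obtain e x where x1: "(\<Sum>k<Suc m. (cmod (x k))\<^sup>2) = 1"
    and ev: "\<forall>k<Suc m. (\<Sum>l<Suc m. a k l * x l) = e * x k"
    using unit_eigenvector_exists[of "Suc m" a] by auto
  obtain w where w: "orthonormal_cols (Suc m) w" and w0: "\<forall>k<Suc m. w k 0 = x k"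
    using orthonormal_completion[OF _ x1] by auto
  define a' where "a' = fmult (Suc m) (fadj w) (fmult (Suc m) a w)"
  have a'herm: "\<forall>i j. cnj (a' j i) = a' i j"
    and first: "\<forall>i<Suc m. a' i 0 = (if i = 0 then complex_of_real (Re e) else 0)
                         \<and> a' 0 i = (if i = 0 then complex_of_real (Re e) else 0)"
    using unitary_conj_eigvec[OF Suc.prems w, of e] ev w0 unfolding a'_def by auto
  have "fadj (ftrunc m (\<lambda>i j. a' (Suc i) (Suc j))) = ftrunc m (\<lambda>i j. a' (Suc i) (Suc j))"
    unfolding fadj_def ftrunc_def using a'herm by (auto intro!: ext)
  from Suc.IH[OF this] obtain u' d' where u': "orthonormal_cols m u'"
    and lower: "ftrunc m (\<lambda>i j. a' (Suc i) (Suc j)) = fmult m (fmult m u' (fdiag d')) (fadj u')"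
    by auto
  obtain U d where U: "orthonormal_cols (Suc m) U"
    and dec: "ftrunc (Suc m) a' = fmult (Suc m) (fmult (Suc m) U (fdiag d)) (fadj U)"
    using spectral_block_extend[OF first u' lower] by blast
  from spectral_unitary_conj[OF w U dec[unfolded a'_def]] show ?case by blast
qed

definition spectral_decomp ::
    "nat \<Rightarrow> (nat \<Rightarrow> nat \<Rightarrow> complex) \<Rightarrow> (nat \<Rightarrow> real) \<Rightarrow> (nat \<Rightarrow> nat \<Rightarrow> complex) \<Rightarrow> bool" where
  "spectral_decomp n A d u \<longleftrightarrow> orthonormal_cols n u \<and>
     (\<forall>i<n. \<forall>j<n. A i j = (\<Sum>r<n. complex_of_real (d r) * u i r * cnj (u j r)))"

lemma spectral_decomp_exists:
  assumes "\<forall>i<n. \<forall>j<n. a i j = cnj (a j i)"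
  shows "\<exists>d u. spectral_decomp n a d u"
proof -
  have "cnj (a j i) = a i j" if "i < n" "j < n" for i j
    using assms that by (metis complex_cnj_cnj)
  hence "fadj (ftrunc n a) = ftrunc n a" unfolding fadj_def ftrunc_def by (auto intro!: ext)
  from spectral_fmult[OF this] obtain u d where u: "orthonormal_cols n u"
    and dec: "ftrunc n a = fmult n (fmult n u (fdiag d)) (fadj u)" by blast
  have "a i j = (\<Sum>r<n. complex_of_real (d r) * u i r * cnj (u j r))" if "i < n" "j < n" for i j
    using fun_cong[OF fun_cong[OF dec, of i], of j] fmult_diag_entry[OF that, of u d] that
    unfolding ftrunc_def by simp
  thus ?thesis using u unfolding spectral_decomp_def by blast
qed

lemma proots_prod_linear_sum:
  fixes xs :: "complex list"
  shows "(\<Sum>ev\<in>#proots (\<Prod>a\<leftarrow>xs. [:- a, 1:]). g ev) = (\<Sum>a\<leftarrow>xs. (g a :: real))"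
proof (induction xs)
  case Nil thus ?case by simp
next
  case (Cons a xs)
  have nz: "(\<Prod>a\<leftarrow>xs. [:- a, 1:]) \<noteq> (0 :: complex poly)" by (auto simp: prod_list_zero_iff)
  have nz1: "[:- a, 1:] \<noteq> (0 :: complex poly)" by (simp only: pCons_eq_0_iff) simp
  have p: "(\<Prod>a\<leftarrow>a # xs. [:- a, 1:]) = [:- a, 1:] * (\<Prod>a\<leftarrow>xs. [:- a, 1:])"
    by (simp only: list.map prod_list.Cons)
  have "proots (\<Prod>a\<leftarrow>a # xs. [:- a, 1:]) = proots [:- a, 1:] + proots (\<Prod>a\<leftarrow>xs. [:- a, 1:])"
    unfolding p by (rule proots_mult[OF nz1 nz])
  also have "proots [:- a, 1:] = {#a#}" using proots_linear_factor[of "-a"] by (simp only: minus_minus)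
  finally show ?case
    by (simp only: image_mset_union image_mset_single sum_mset.union sum_mset.singleton
        list.map sum_list.Cons Cons.IH)
qed

lemma ftrunc_eqD: "ftrunc n f = ftrunc n g \<Longrightarrow> i < n \<Longrightarrow> j < n \<Longrightarrow> f i j = g i j"
  unfolding ftrunc_def by (drule fun_cong[of _ _ i], drule fun_cong[of _ _ j]) simp

lemma ftrunc_mat_mult:
  "X \<in> carrier_mat n n \<Longrightarrow> Y \<in> carrier_mat n n \<Longrightarrow>
     ftrunc n (\<lambda>i j. (X * Y) $$ (i,j)) = fmult n (\<lambda>i j. X $$ (i,j)) (\<lambda>i j. Y $$ (i,j))"
  unfolding ftrunc_def fmult_def by (auto intro!: ext sum.cong simp: scalar_prod_def lessThan_atLeast0)

lemma spectral_decomp_similar: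
  fixes A :: "complex mat"
  assumes A: "A \<in> carrier_mat n n" and dec: "spectral_decomp n (\<lambda>i j. A $$ (i,j)) d u"
  defines "D \<equiv> mat n n (\<lambda>(i,j). if i = j then complex_of_real (d i) else 0)"
  shows "similar_mat A D"
proof -
  have u: "orthonormal_cols n u" using dec unfolding spectral_decomp_def by blast
  have Adec: "ftrunc n (\<lambda>i j. A $$ (i,j)) = fmult n (fmult n u (fdiag d)) (fadj u)"
  proof (intro ext)
    fix i j
    show "ftrunc n (\<lambda>i j. A $$ (i,j)) i j = fmult n (fmult n u (fdiag d)) (fadj u) i j"
    proof (cases "i < n \<and> j < n")
      case True thus ?thesis
        using dec fmult_diag_entry[of i n j u d] unfolding spectral_decomp_def ftrunc_def by simp
    qed (auto simp: ftrunc_def fmult_def)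
  qed
  define U :: "complex mat" where "U = mat n n (\<lambda>(i,j). u i j)"
  define Uh :: "complex mat" where "Uh = mat n n (\<lambda>(i,j). cnj (u j i))"
  have U: "U \<in> carrier_mat n n" and Uh: "Uh \<in> carrier_mat n n" and D: "D \<in> carrier_mat n n"
    unfolding U_def Uh_def D_def by auto
  have eU: "ftrunc n (\<lambda>i j. U $$ (i,j)) = ftrunc n u"
    and eUh: "ftrunc n (\<lambda>i j. Uh $$ (i,j)) = ftrunc n (fadj u)"
    and eD: "ftrunc n (\<lambda>i j. D $$ (i,j)) = ftrunc n (fdiag d)"
    unfolding U_def Uh_def D_def ftrunc_def fadj_def fdiag_def by (auto intro!: ext)
  have "ftrunc n (\<lambda>i j. (Uh * U) $$ (i,j)) = ftrunc n fid"
    using ftrunc_mat_mult[OF Uh U] u orthonormal_cols_fmult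
    by (metis eU eUh fmult_trunc_left fmult_trunc_right)
  hence UhU: "Uh * U = 1\<^sub>m n"
    using U Uh by (intro eq_matI) (auto dest: ftrunc_eqD simp: fid_def)
  hence UUh: "U * Uh = 1\<^sub>m n" by (rule mat_mult_left_right_inverse[OF Uh U])
  have "ftrunc n (\<lambda>i j. (U * D * Uh) $$ (i,j)) = fmult n (fmult n u (fdiag d)) (fadj u)"
    using ftrunc_mat_mult[OF mult_carrier_mat[OF U D] Uh] ftrunc_mat_mult[OF U D]
    by (metis eU eUh eD fmult_trunc_left fmult_trunc_right)
  hence "ftrunc n (\<lambda>i j. A $$ (i,j)) = ftrunc n (\<lambda>i j. (U * D * Uh) $$ (i,j))"
    using Adec by simp
  hence AUDU: "A = U * D * Uh"
    using A U D Uh by (intro eq_matI) (auto dest: ftrunc_eqD)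
  show "similar_mat A D"
    by (rule similar_matI[OF _ UUh UhU AUDU]) (use A U Uh D in auto)
qed

lemma hermitian_spectral:
  fixes A :: "complex mat"
  assumes A: "A \<in> carrier_mat n n" and herm: "\<forall>i<n. \<forall>j<n. A $$ (i,j) = cnj (A $$ (j,i))"
  shows "\<exists>d u. spectral_decomp n (\<lambda>i j. A $$ (i,j)) d u \<and> vn_entropy A = - (\<Sum>r<n. xlogx (d r))"
proof -
  obtain d u where dec: "spectral_decomp n (\<lambda>i j. A $$ (i,j)) d u"
    using spectral_decomp_exists[of n "\<lambda>i j. A $$ (i,j)"] herm by blast
  define D :: "complex mat" where "D = mat n n (\<lambda>(i,j). if i = j then complex_of_real (d i) else 0)"
  have D: "D \<in> carrier_mat n n" unfolding D_def by simp
  have "char_poly A = char_poly D"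
    using spectral_decomp_similar[OF A dec] unfolding D_def by (rule char_poly_similar)
  also have "\<dots> = (\<Prod>a\<leftarrow>diag_mat D. [:- a, 1:])"
    by (rule char_poly_upper_triangular[OF D]) (auto simp: upper_triangular_def D_def)
  finally have cp: "char_poly A = (\<Prod>a\<leftarrow>diag_mat D. [:- a, 1:])" .
  have diag: "diag_mat D = map (\<lambda>i. complex_of_real (d i)) [0..<n]"
    unfolding diag_mat_def D_def by auto
  have "vn_entropy A = - (\<Sum>a\<leftarrow>diag_mat D. xlogx (Re a))"
    unfolding vn_entropy_def cp proots_prod_linear_sum ..
  also have "\<dots> = - (\<Sum>r<n. xlogx (d r))"
    unfolding diag by (simp add: sum_set_upt_conv_sum_list_nat[symmetric] lessThan_atLeast0 o_def)
  finally show ?thesis using dec by blast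
qed

definition qform :: "nat \<Rightarrow> (nat \<Rightarrow> nat \<Rightarrow> complex) \<Rightarrow> (nat \<Rightarrow> complex) \<Rightarrow> complex" where
  "qform n A x = (\<Sum>i<n. \<Sum>j<n. cnj (x i) * A i j * x j)"

lemma qform_lincomb:
  "qform n (\<lambda>i j. a * A i j + b * B i j) x = a * qform n A x + b * qform n B x"
proof -
  have "cnj (x i) * (a * A i j + b * B i j) * x j = a * (cnj (x i) * A i j * x j) + b * (cnj (x i) * B i j * x j)"
    for i j by (simp add: algebra_simps)
  thus ?thesis unfolding qform_def by (simp add: sum.distrib sum_distrib_left)
qed

lemma qform_fid:
  assumes p: "p < n" shows "qform n A (\<lambda>i. fid i p) = A p p"
proof -
  have "(\<Sum>j<n. cnj (fid i p) * A i j * fid j p) = cnj (fid i p) * A i p" for i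
    using sum_delta_mult[OF p, of "\<lambda>j. cnj (fid i p) * A i j"] unfolding fid_def by simp
  moreover have "cnj (fid i p) = fid i p" for i by (simp add: fid_def)
  ultimately have "qform n A (\<lambda>i. fid i p) = (\<Sum>i<n. A i p * fid i p)"
    unfolding qform_def by (simp add: mult.commute)
  also have "\<dots> = A p p" using sum_delta_mult[OF p, of "\<lambda>i. A i p"] unfolding fid_def .
  finally show ?thesis .
qed

lemma orthonormal_cols_fid: "orthonormal_cols n fid"
  unfolding orthonormal_cols_def fid_def by (auto simp: if_distrib sum.delta cong: if_cong)

lemma spectral_decomp_hermitian:
  assumes "spectral_decomp n A d u" "i < n" "j < n"
  shows "cnj (A j i) = A i j"
  using assms unfolding spectral_decomp_def by (simp add: ac_simps)

lemma spectral_eigvec: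
  assumes A: "spectral_decomp n A d u" and i: "i < n" and r: "r < n"
  shows "(\<Sum>j<n. A i j * u j r) = complex_of_real (d r) * u i r"
proof -
  have u: "orthonormal_cols n u" and Aij: "\<forall>i<n. \<forall>j<n. A i j = (\<Sum>s<n. complex_of_real (d s) * u i s * cnj (u j s))"
    using A unfolding spectral_decomp_def by auto
  have "(\<Sum>j<n. A i j * u j r) = (\<Sum>j<n. \<Sum>s<n. complex_of_real (d s) * u i s * (cnj (u j s) * u j r))"
    using Aij i by (auto intro!: sum.cong simp: sum_distrib_right mult.assoc)
  also have "\<dots> = (\<Sum>s<n. complex_of_real (d s) * u i s * (\<Sum>j<n. cnj (u j s) * u j r))"
    by (subst sum.swap) (simp add: sum_distrib_left)
  also have "\<dots> = (\<Sum>s<n. complex_of_real (d s) * u i s * (if s = r then 1 else 0))"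
    using u r unfolding orthonormal_cols_def by (intro sum.cong refl) auto
  also have "\<dots> = complex_of_real (d r) * u i r" by (rule sum_delta_mult[OF r])
  finally show ?thesis .
qed

lemma spectral_eigval:
  assumes A: "spectral_decomp n A d u" and r: "r < n"
  shows "qform n A (\<lambda>i. u i r) = complex_of_real (d r)"
proof -
  have "qform n A (\<lambda>i. u i r) = (\<Sum>i<n. cnj (u i r) * (\<Sum>j<n. A i j * u j r))"
    unfolding qform_def by (simp add: sum_distrib_left mult.assoc)
  also have "\<dots> = complex_of_real (d r) * (\<Sum>i<n. cnj (u i r) * u i r)"
    using spectral_eigvec[OF A _ r] by (auto intro!: sum.cong simp: sum_distrib_left mult.left_commute)
  also have "(\<Sum>i<n. cnj (u i r) * u i r) = 1"
    using A r unfolding spectral_decomp_def orthonormal_cols_def by auto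
  finally show ?thesis by simp
qed

lemma spectral_qform:
  assumes A: "spectral_decomp n A d u"
  shows "qform n A x = complex_of_real (\<Sum>r<n. d r * (cmod (\<Sum>i<n. cnj (x i) * u i r))\<^sup>2)"
proof -
  have "qform n A x = (\<Sum>i<n. \<Sum>j<n. \<Sum>r<n.
          complex_of_real (d r) * (cnj (x i) * u i r) * (x j * cnj (u j r)))"
    using A unfolding qform_def spectral_decomp_def
    by (auto intro!: sum.cong simp: sum_distrib_left sum_distrib_right mult.commute mult.left_commute)
  also have "\<dots> = (\<Sum>r<n. \<Sum>i<n. \<Sum>j<n.
          complex_of_real (d r) * (cnj (x i) * u i r) * (x j * cnj (u j r)))"
    by (rule sum_swap3[symmetric])
  also have "\<dots> = (\<Sum>r<n. complex_of_real (d r) *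
          ((\<Sum>i<n. cnj (x i) * u i r) * (\<Sum>j<n. x j * cnj (u j r))))"
    by (simp add: sum_product sum_distrib_left ac_simps)
  also have "\<dots> = (\<Sum>r<n. complex_of_real (d r) *
          ((\<Sum>i<n. cnj (x i) * u i r) * cnj (\<Sum>i<n. cnj (x i) * u i r)))"
    by simp
  also have "\<dots> = complex_of_real (\<Sum>r<n. d r * (cmod (\<Sum>i<n. cnj (x i) * u i r))\<^sup>2)"
    unfolding of_real_sum of_real_mult complex_norm_square ..
  finally show ?thesis .
qed

lemma parseval:
  fixes w :: "nat \<Rightarrow> nat \<Rightarrow> complex" and x :: "nat \<Rightarrow> complex"
  assumes w: "\<forall>i<n. \<forall>i'<n. (\<Sum>r<N. w r i * cnj (w r i')) = (if i = i' then 1 else 0)"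
  shows "(\<Sum>r<N. (cmod (\<Sum>i<n. w r i * x i))\<^sup>2) = (\<Sum>i<n. (cmod (x i))\<^sup>2)"
proof -
  have "complex_of_real (\<Sum>r<N. (cmod (\<Sum>i<n. w r i * x i))\<^sup>2) =
      (\<Sum>r<N. \<Sum>i'<n. \<Sum>i<n. x i * cnj (x i') * (w r i * cnj (w r i')))"
    unfolding of_real_sum complex_norm_square
    by (simp add: sum_distrib_left sum_distrib_right mult.commute mult.left_commute)
  also have "\<dots> = (\<Sum>i'<n. \<Sum>i<n. x i * cnj (x i') * (\<Sum>r<N. w r i * cnj (w r i')))"
    by (subst sum_swap3) (simp add: sum_distrib_left)
  also have "\<dots> = (\<Sum>i'<n. \<Sum>i<n. x i * cnj (x i') * (if i = i' then 1 else 0))"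
    using w by (intro sum.cong refl) auto
  also have "\<dots> = complex_of_real (\<Sum>i<n. (cmod (x i))\<^sup>2)"
    unfolding of_real_sum complex_norm_square by (intro sum.cong refl) (rule sum_delta_mult, simp)
  finally show ?thesis by (simp only: of_real_eq_iff)
qed

lemma trace_in_basis:
  assumes u: "orthonormal_rows n u"
  shows "(\<Sum>k<n. qform n A (\<lambda>i. u i k)) = (\<Sum>i<n. A i i)"
proof -
  have "(\<Sum>k<n. qform n A (\<lambda>i. u i k)) = (\<Sum>i<n. \<Sum>j<n. A i j * (\<Sum>k<n. u j k * cnj (u i k)))"
    unfolding qform_def
    by (subst sum_swap3) (simp add: sum_distrib_left mult.commute mult.left_commute)
  also have "\<dots> = (\<Sum>i<n. \<Sum>j<n. A i j * (if j = i then 1 else 0))"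
    using u unfolding orthonormal_rows_def by (intro sum.cong refl) auto
  also have "\<dots> = (\<Sum>i<n. A i i)" by (intro sum.cong refl) (rule sum_delta_mult, simp)
  finally show ?thesis .
qed

lemma spectral_trace:
  assumes A: "spectral_decomp n A d u"
  shows "(\<Sum>i<n. A i i) = complex_of_real (\<Sum>r<n. d r)"
proof -
  have "orthonormal_rows n u" using A orthonormal_cols_rows unfolding spectral_decomp_def by blast
  from trace_in_basis[OF this, of A, symmetric] show ?thesis
    unfolding of_real_sum using spectral_eigval[OF A] by simp
qed

lemma eigvec_orthogonal:
  assumes W: "spectral_decomp n \<omega> \<mu> e" and k: "k < n"
    and z: "\<forall>i<n. (\<Sum>j<n. \<omega> i j * z j) = complex_of_real g * z i" and ne: "\<mu> k \<noteq> g"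
  shows "(\<Sum>i<n. cnj (e i k) * z i) = 0"
proof -
  have ew: "(\<Sum>i<n. cnj (e i k) * \<omega> i j) = complex_of_real (\<mu> k) * cnj (e j k)" if j: "j < n" for j
  proof -
    have "cnj (\<Sum>i<n. \<omega> j i * e i k) = (\<Sum>i<n. cnj (e i k) * \<omega> i j)"
      using spectral_decomp_hermitian[OF W _ j] by (auto intro!: sum.cong simp: mult.commute)
    thus ?thesis using spectral_eigvec[OF W j k] by simp
  qed
  have "complex_of_real g * (\<Sum>i<n. cnj (e i k) * z i) = (\<Sum>i<n. cnj (e i k) * (\<Sum>j<n. \<omega> i j * z j))"
    using z by (simp add: sum_distrib_left mult.left_commute)
  also have "\<dots> = (\<Sum>i<n. \<Sum>j<n. cnj (e i k) * \<omega> i j * z j)"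
    by (simp add: sum_distrib_left mult.assoc)
  also have "\<dots> = (\<Sum>j<n. \<Sum>i<n. cnj (e i k) * \<omega> i j * z j)"
    by (rule sum.swap)
  also have "\<dots> = (\<Sum>j<n. (\<Sum>i<n. cnj (e i k) * \<omega> i j) * z j)"
    by (simp add: sum_distrib_right)
  also have "\<dots> = complex_of_real (\<mu> k) * (\<Sum>i<n. cnj (e i k) * z i)"
    using ew by (simp add: sum_distrib_left mult.assoc)
  finally show ?thesis using ne by simp
qed

lemma xlogx_nonpos: "0 \<le> x \<Longrightarrow> x \<le> 1 \<Longrightarrow> xlogx x \<le> 0"
  unfolding xlogx_def by (auto simp: mult_nonneg_nonpos)

(* convexity of x log x: the graph lies above each tangent line *)
lemma xlogx_tangent:
  assumes x: "x > 0" and y: "y \<ge> 0"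
  shows "xlogx y \<ge> y * log 2 x + (y - x) / ln 2"
proof (cases "y = 0")
  case True thus ?thesis using x by (simp add: xlogx_def)
next
  case False
  hence y0: "y > 0" using y by simp
  have "ln (x / y) \<le> x / y - 1" using x y0 by (intro ln_le_minus_one) simp
  hence "y * ln (x / y) \<le> y * (x / y - 1)" using y0 by (intro mult_left_mono) auto
  hence "y * ln x + (y - x) \<le> y * ln y" using x y0 by (simp add: ln_div algebra_simps)
  hence "(y * ln x + (y - x)) / ln 2 \<le> y * ln y / ln 2" by (intro divide_right_mono) auto
  thus ?thesis using y0 unfolding xlogx_def log_def by (simp add: add_divide_distrib)
qed

lemma xlogx_scale:
  assumes t: "t > 0" and l: "l \<ge> 0"
  shows "xlogx (t * l) = t * xlogx l + l * xlogx t"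
proof (cases "l = 0")
  case True thus ?thesis by (simp add: xlogx_def)
next
  case False
  hence lp: "l > 0" using l by simp
  have "t * l > 0" using t lp by simp
  hence "xlogx (t * l) = t * l * log 2 (t * l)" unfolding xlogx_def by simp
  also have "\<dots> = t * (l * log 2 l) + l * (t * log 2 t)" using t lp by (simp add: log_mult algebra_simps)
  also have "\<dots> = t * xlogx l + l * xlogx t" unfolding xlogx_def using t lp by simp
  finally show ?thesis .
qed

lemma xlogx_sum_scale:
  assumes t: "t > 0" and l: "\<forall>p<n. l p \<ge> 0" and l1: "(\<Sum>p<n. l p) = 1"
  shows "(\<Sum>p<n. xlogx (t * l p)) = t * (\<Sum>p<n. xlogx (l p)) + xlogx t"
proof -
  have "(\<Sum>p<n. xlogx (t * l p)) = (\<Sum>p<n. t * xlogx (l p) + l p * xlogx t)"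
    using l t by (intro sum.cong refl xlogx_scale) auto
  also have "\<dots> = t * (\<Sum>p<n. xlogx (l p)) + (\<Sum>p<n. l p) * xlogx t"
    by (simp add: sum.distrib sum_distrib_left sum_distrib_right)
  finally show ?thesis using l1 by simp
qed

lemma xlogx_jensen:
  fixes D x :: "nat \<Rightarrow> real"
  assumes x: "\<forall>k<K. x k \<ge> 0" and D: "\<forall>k<K. D k \<ge> 0" and W: "(\<Sum>k<K. D k) \<le> 1"
  shows "xlogx (\<Sum>k<K. D k * x k) \<le> (\<Sum>k<K. D k * xlogx (x k))"
proof -
  define X where "X = (\<Sum>k<K. D k * x k)"
  have X0: "X \<ge> 0" unfolding X_def using x D by (intro sum_nonneg) auto
  show ?thesis
  proof (cases "X = 0")
    case True
    have "\<forall>k\<in>{..<K}. D k * x k = 0"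
      using True unfolding X_def by (subst sum_nonneg_eq_0_iff[symmetric]) (use x D in auto)
    hence "(\<Sum>k<K. D k * xlogx (x k)) = 0" by (intro sum.neutral) (auto simp: xlogx_def)
    thus ?thesis using True unfolding X_def by (simp add: xlogx_def)
  next
    case False
    hence Xp: "X > 0" using X0 by simp
    have "(\<Sum>k<K. D k) * X \<le> 1 * X" using W X0 by (intro mult_right_mono) auto
    hence "X * log 2 X \<le> X * log 2 X + (X - (\<Sum>k<K. D k) * X) / ln 2"
      by (simp add: divide_nonneg_pos)
    also have "\<dots> = (\<Sum>k<K. D k * (x k * log 2 X + (x k - X) / ln 2))"
    proof -
      have pt: "D k * (x k * log 2 X + (x k - X) / ln 2) =
          (D k * x k) * log 2 X + ((D k * x k) - D k * X) / ln 2" for k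
        by (simp add: algebra_simps diff_divide_distrib add_divide_distrib)
      show ?thesis
        unfolding pt sum.distrib sum_divide_distrib[symmetric] sum_subtractf
          sum_distrib_right[symmetric]
        by (simp add: X_def)
    qed
    also have "\<dots> \<le> (\<Sum>k<K. D k * xlogx (x k))"
      using xlogx_tangent[OF Xp] x D by (intro sum_mono mult_left_mono) auto
    finally show ?thesis using Xp unfolding xlogx_def X_def by simp
  qed
qed

lemma xlogx_stochastic:
  fixes D :: "nat \<Rightarrow> nat \<Rightarrow> real" and x :: "nat \<Rightarrow> real"
  assumes x: "\<forall>k<K. x k \<ge> 0" and D: "\<forall>r<N. \<forall>k<K. D r k \<ge> 0"
    and rows: "\<forall>r<N. (\<Sum>k<K. D r k) \<le> 1" and cols: "\<forall>k<K. x k \<noteq> 0 \<longrightarrow> (\<Sum>r<N. D r k) = 1"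
  shows "(\<Sum>r<N. xlogx (\<Sum>k<K. D r k * x k)) \<le> (\<Sum>k<K. xlogx (x k))"
proof -
  have "(\<Sum>r<N. xlogx (\<Sum>k<K. D r k * x k)) \<le> (\<Sum>r<N. \<Sum>k<K. D r k * xlogx (x k))"
    by (rule sum_mono, rule xlogx_jensen) (use x D rows in auto)
  also have "\<dots> = (\<Sum>k<K. (\<Sum>r<N. D r k) * xlogx (x k))"
    by (subst sum.swap) (simp add: sum_distrib_right)
  also have "\<dots> = (\<Sum>k<K. xlogx (x k))"
    by (rule sum.cong) (use cols in \<open>auto simp: xlogx_def\<close>)
  finally show ?thesis .
qed

lemma xlogx_dominated:
  assumes q: "0 \<le> q" "q \<le> 1" and d: "0 \<le> d" and r: "0 \<le> r" "r \<le> 1 - q"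
  shows "xlogx (q * d + r) \<le> q * xlogx d"
proof -
  define x where "x = q * d + r"
  have x0: "x \<ge> 0" unfolding x_def using q d r by simp
  consider "x = 0" | "x > 0" "d = 0" | "x > 0" "d > 0" using x0 d by linarith
  thus ?thesis
  proof cases
    case 1
    hence "q * d = 0" "r = 0" unfolding x_def using q d r by (auto simp: add_nonneg_eq_0_iff)
    thus ?thesis using 1 unfolding x_def by (auto simp: xlogx_def)
  next
    case 2
    thus ?thesis using xlogx_nonpos[of r] r q by (simp add: xlogx_def)
  next
    case 3
    hence xp: "x > 0" and dp: "d > 0" by auto
    have "r * ln x \<le> r * (x - 1)" using ln_le_minus_one[OF xp] r by (intro mult_left_mono) auto
    also have "r * (x - 1) \<le> q * (d - x)"
    proof -
      have "q * (d - x) - r * (x - 1) = x * (1 - q - r)" unfolding x_def by (simp add: algebra_simps)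
      also have "\<dots> \<ge> 0" using x0 r by simp
      finally show ?thesis by simp
    qed
    finally have key: "r * ln x \<le> q * (d - x)" .
    have "x * log 2 x = q * d * log 2 x + r * ln x / ln 2"
      unfolding x_def log_def by (simp add: algebra_simps add_divide_distrib)
    also have "\<dots> \<le> q * (d * log 2 x + (d - x) / ln 2)"
      using key by (simp add: divide_right_mono algebra_simps)
    also have "\<dots> \<le> q * xlogx d" using xlogx_tangent[OF xp d] q by (intro mult_left_mono) auto
    finally show ?thesis using xp unfolding xlogx_def x_def[symmetric] by simp
  qed
qed

lemma xlogx_overlap_le:
  fixes w :: "nat \<Rightarrow> nat \<Rightarrow> real" and \<gamma> \<mu> :: "nat \<Rightarrow> real"
  assumes w0: "\<forall>r<N. \<forall>k<n. w r k \<ge> 0"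
    and rows: "\<forall>r<N. (\<Sum>k<n. w r k) = \<gamma> r"
    and cols: "\<forall>k<n. (\<Sum>r<N. w r k) = \<mu> k"
    and support: "\<forall>r<N. \<forall>k<n. w r k \<noteq> 0 \<longrightarrow> \<mu> k = \<gamma> r"
  shows "(\<Sum>r<N. xlogx (\<gamma> r)) \<le> (\<Sum>k<n. xlogx (\<mu> k))"
proof -
  have mu0: "\<mu> k \<ge> 0" if "k < n" for k using cols w0 that by (metis sum_nonneg lessThan_iff)
  have w_mu: "w r k = 0" if "r < N" "k < n" "\<mu> k = 0" for r k
    using cols w0 that sum_nonneg_eq_0_iff[of "{..<N}" "\<lambda>r. w r k"] by auto
  have w_gamma: "w r k = 0" if "r < N" "k < n" "\<gamma> r = 0" for r k
    using rows w0 that sum_nonneg_eq_0_iff[of "{..<n}" "w r"] by auto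
  define D where "D = (\<lambda>r k. if \<mu> k = 0 then 0 else w r k / \<mu> k)"
  have mix: "(\<Sum>k<n. D r k * \<mu> k) = \<gamma> r" if r: "r < N" for r
  proof -
    have "(\<Sum>k<n. D r k * \<mu> k) = (\<Sum>k<n. w r k)"
      by (rule sum.cong) (auto simp: D_def w_mu[OF r])
    thus ?thesis using rows r by simp
  qed
  have "(\<Sum>r<N. xlogx (\<Sum>k<n. D r k * \<mu> k)) \<le> (\<Sum>k<n. xlogx (\<mu> k))"
  proof (rule xlogx_stochastic)
    show "\<forall>k<n. 0 \<le> \<mu> k" using mu0 by auto
    show "\<forall>r<N. \<forall>k<n. 0 \<le> D r k" unfolding D_def using mu0 w0 by auto
    show "\<forall>r<N. (\<Sum>k<n. D r k) \<le> 1"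
    proof (intro allI impI)
      fix r assume r: "r < N"
      show "(\<Sum>k<n. D r k) \<le> 1"
      proof (cases "\<gamma> r = 0")
        case True
        hence "(\<Sum>k<n. D r k) = 0" using w_gamma[OF r] unfolding D_def by (intro sum.neutral) auto
        thus ?thesis by simp
      next
        case False
        have "(\<Sum>k<n. D r k) = (\<Sum>k<n. w r k / \<gamma> r)"
          using support r w_mu[OF r] unfolding D_def by (intro sum.cong) auto
        thus ?thesis using rows r False by (simp add: sum_divide_distrib[symmetric])
      qed
    qed
    show "\<forall>k<n. \<mu> k \<noteq> 0 \<longrightarrow> (\<Sum>r<N. D r k) = 1"
      using cols unfolding D_def by (simp add: sum_divide_distrib[symmetric])
  qed
  thus ?thesis using mix by simp
qed

lemma diagonal_xlogx_le_spectrum: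
  assumes e: "orthonormal_cols n e" and A: "spectral_decomp n A l u" and l0: "\<forall>r<n. l r \<ge> 0"
  shows "(\<Sum>k<n. xlogx (Re (qform n A (\<lambda>i. e i k)))) \<le> (\<Sum>r<n. xlogx (l r))"
proof -
  have u: "orthonormal_cols n u" using A unfolding spectral_decomp_def by blast
  have ec: "orthonormal_rows n e" and uc: "orthonormal_rows n u"
    using e u by (auto intro: orthonormal_cols_rows)
  define D where "D = (\<lambda>k r. (cmod (\<Sum>i<n. cnj (e i k) * u i r))\<^sup>2)"
  have diag: "Re (qform n A (\<lambda>i. e i k)) = (\<Sum>r<n. D k r * l r)" for k
    unfolding spectral_qform[OF A] D_def by (simp add: mult.commute)
  have rows: "(\<Sum>r<n. D k r) = 1" if k: "k < n" for k
  proof -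
    have "(\<Sum>r<n. D k r) = (\<Sum>r<n. (cmod (\<Sum>i<n. cnj (u i r) * e i k))\<^sup>2)"
    proof (rule sum.cong[OF refl])
      fix r
      have "cnj (\<Sum>i<n. cnj (e i k) * u i r) = (\<Sum>i<n. cnj (u i r) * e i k)" by (simp add: mult.commute)
      thus "D k r = (cmod (\<Sum>i<n. cnj (u i r) * e i k))\<^sup>2" unfolding D_def by (metis complex_mod_cnj)
    qed
    also have "\<dots> = (\<Sum>i<n. (cmod (e i k))\<^sup>2)"
      by (rule parseval) (use uc in \<open>auto simp: orthonormal_rows_def mult.commute\<close>)
    also have "\<dots> = 1" by (rule orthonormal_cols_norm[OF e k])
    finally show ?thesis .
  qed
  have cols: "(\<Sum>k<n. D k r) = 1" if r: "r < n" for r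
  proof -
    have "(\<Sum>k<n. D k r) = (\<Sum>i<n. (cmod (u i r))\<^sup>2)"
      unfolding D_def
      by (rule parseval) (use ec in \<open>auto simp: orthonormal_rows_def mult.commute\<close>)
    also have "\<dots> = 1" by (rule orthonormal_cols_norm[OF u r])
    finally show ?thesis .
  qed
  have "(\<Sum>k<n. xlogx (\<Sum>r<n. D k r * l r)) \<le> (\<Sum>r<n. xlogx (l r))"
    by (rule xlogx_stochastic) (use l0 rows cols in \<open>auto simp: D_def\<close>)
  thus ?thesis unfolding diag .
qed

lemma eigenfamily_xlogx_le:
  fixes z :: "nat \<Rightarrow> nat \<Rightarrow> complex" and \<gamma> :: "nat \<Rightarrow> real"
  assumes W: "spectral_decomp n \<omega> \<mu> e"
    and norm: "\<forall>r<N. (\<Sum>i<n. (cmod (z r i))\<^sup>2) = \<gamma> r"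
    and eig: "\<forall>r<N. \<forall>i<n. (\<Sum>j<n. \<omega> i j * z r j) = complex_of_real (\<gamma> r) * z r i"
    and frame: "\<forall>i<n. \<forall>j<n. \<omega> i j = (\<Sum>r<N. z r i * cnj (z r j))"
  shows "(\<Sum>r<N. xlogx (\<gamma> r)) \<le> (\<Sum>k<n. xlogx (\<mu> k))"
proof -
  have ec: "orthonormal_rows n e"
    using W orthonormal_cols_rows unfolding spectral_decomp_def by blast
  define P where "P = (\<lambda>r k. \<Sum>i<n. cnj (e i k) * z r i)"
  show ?thesis
  proof (rule xlogx_overlap_le[of N n "\<lambda>r k. (cmod (P r k))\<^sup>2"], safe)
    fix r assume r: "r < N"
    have "(\<Sum>k<n. (cmod (P r k))\<^sup>2) = (\<Sum>i<n. (cmod (z r i))\<^sup>2)"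
      unfolding P_def
      by (rule parseval) (use ec in \<open>auto simp: orthonormal_rows_def mult.commute\<close>)
    thus "(\<Sum>k<n. (cmod (P r k))\<^sup>2) = \<gamma> r" using norm r by simp
  next
    fix k assume k: "k < n"
    have "complex_of_real (\<Sum>r<N. (cmod (P r k))\<^sup>2) =
        (\<Sum>r<N. (\<Sum>i<n. cnj (e i k) * z r i) * (\<Sum>j<n. e j k * cnj (z r j)))"
      unfolding of_real_sum complex_norm_square P_def by (simp add: mult.commute)
    also have "\<dots> = (\<Sum>i<n. \<Sum>j<n. cnj (e i k) * (\<Sum>r<N. z r i * cnj (z r j)) * e j k)"
      unfolding sum_prod3 by (intro sum.cong refl) (simp add: sum_distrib_left sum_distrib_right ac_simps)
    also have "\<dots> = qform n \<omega> (\<lambda>i. e i k)"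
      unfolding qform_def using frame by (intro sum.cong refl) auto
    also have "\<dots> = complex_of_real (\<mu> k)" by (rule spectral_eigval[OF W k])
    finally show "(\<Sum>r<N. (cmod (P r k))\<^sup>2) = \<mu> k" by (simp only: of_real_eq_iff)
  next
    fix r k assume r: "r < N" and k: "k < n" and "(cmod (P r k))\<^sup>2 \<noteq> 0"
    hence "P r k \<noteq> 0" by auto
    thus "\<mu> k = \<gamma> r"
      using eigvec_orthogonal[OF W k, of "z r" "\<gamma> r"] eig r unfolding P_def by auto
  qed auto
qed

(* the Gram matrix G = (<c_p|c_p'>) of the vectors c_p and the mixture \<omega> = \<Sum>_p c_p c_p^* share
   their nonzero spectrum: each eigenvector f_r of G (eigenvalue \<gamma>_r) yields the eigenvector
   z_r = \<Sum>_p f_pr c_p of \<omega> with |z_r|^2 = \<gamma>_r, and \<omega> = \<Sum>_r z_r z_r^* *)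
lemma gram_eigenvectors:
  fixes c :: "nat \<Rightarrow> nat \<Rightarrow> complex"
  assumes Gdec: "spectral_decomp N G \<gamma> f"
    and G: "G = (\<lambda>p p'. \<Sum>i<n. cnj (c p i) * c p' i)"
    and ens: "\<forall>i<n. \<forall>j<n. \<omega> i j = (\<Sum>p<N. c p i * cnj (c p j))"
  defines "z \<equiv> \<lambda>r i. \<Sum>p<N. f p r * c p i"
  shows "\<forall>r<N. (\<Sum>i<n. (cmod (z r i))\<^sup>2) = \<gamma> r"
    and "\<forall>r<N. \<forall>i<n. (\<Sum>j<n. \<omega> i j * z r j) = complex_of_real (\<gamma> r) * z r i"
    and "\<forall>i<n. \<forall>j<n. \<omega> i j = (\<Sum>r<N. z r i * cnj (z r j))"
proof -
  show "\<forall>r<N. (\<Sum>i<n. (cmod (z r i))\<^sup>2) = \<gamma> r"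
  proof (intro allI impI)
    fix r assume r: "r < N"
    have "complex_of_real (\<gamma> r) = (\<Sum>p<N. \<Sum>p'<N. cnj (f p r) * G p p' * f p' r)"
      using spectral_eigval[OF Gdec r] unfolding qform_def by simp
    also have "\<dots> = (\<Sum>p<N. \<Sum>p'<N. \<Sum>i<n. cnj (f p r) * cnj (c p i) * (c p' i * f p' r))"
      unfolding G by (simp add: sum_distrib_left sum_distrib_right mult.assoc)
    also have "\<dots> = (\<Sum>i<n. \<Sum>p<N. \<Sum>p'<N. cnj (f p r) * cnj (c p i) * (c p' i * f p' r))"
      by (subst sum_swap3, subst sum_swap3) (rule refl)
    also have "\<dots> = (\<Sum>i<n. (\<Sum>p<N. cnj (f p r) * cnj (c p i)) * (\<Sum>p'<N. c p' i * f p' r))"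
      by (simp add: sum_product)
    also have "\<dots> = (\<Sum>i<n. cnj (z r i) * z r i)"
      unfolding z_def by (simp add: mult.commute)
    also have "\<dots> = complex_of_real (\<Sum>i<n. (cmod (z r i))\<^sup>2)"
      unfolding of_real_sum complex_norm_square by (simp add: mult.commute)
    finally show "(\<Sum>i<n. (cmod (z r i))\<^sup>2) = \<gamma> r" by (simp only: of_real_eq_iff)
  qed
  show "\<forall>r<N. \<forall>i<n. (\<Sum>j<n. \<omega> i j * z r j) = complex_of_real (\<gamma> r) * z r i"
  proof (intro allI impI)
    fix r i assume r: "r < N" and i: "i < n"
    have "(\<Sum>j<n. \<omega> i j * z r j) = (\<Sum>j<n. (\<Sum>p<N. c p i * cnj (c p j)) * (\<Sum>p'<N. f p' r * c p' j))"
      unfolding z_def using ens i by (intro sum.cong refl) auto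
    also have "\<dots> = (\<Sum>j<n. \<Sum>p<N. \<Sum>p'<N. c p i * cnj (c p j) * (f p' r * c p' j))"
      by (simp add: sum_product)
    also have "\<dots> = (\<Sum>p<N. \<Sum>p'<N. \<Sum>j<n. c p i * cnj (c p j) * (f p' r * c p' j))"
      by (rule sum_swap3)
    also have "\<dots> = (\<Sum>p<N. c p i * (\<Sum>p'<N. G p p' * f p' r))"
      unfolding G by (simp add: sum_distrib_left sum_distrib_right mult.commute mult.left_commute)
    also have "\<dots> = (\<Sum>p<N. c p i * (complex_of_real (\<gamma> r) * f p r))"
      using spectral_eigvec[OF Gdec _ r] by (intro sum.cong refl) auto
    also have "\<dots> = complex_of_real (\<gamma> r) * z r i"
      unfolding z_def by (simp add: sum_distrib_left mult.commute mult.left_commute)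
    finally show "(\<Sum>j<n. \<omega> i j * z r j) = complex_of_real (\<gamma> r) * z r i" .
  qed
  show "\<forall>i<n. \<forall>j<n. \<omega> i j = (\<Sum>r<N. z r i * cnj (z r j))"
  proof (intro allI impI)
    fix i j assume i: "i < n" and j: "j < n"
    have fc: "orthonormal_rows N f"
      using Gdec orthonormal_cols_rows unfolding spectral_decomp_def by blast
    have "(\<Sum>r<N. z r i * cnj (z r j)) =
        (\<Sum>r<N. (\<Sum>p<N. f p r * c p i) * (\<Sum>p'<N. cnj (f p' r) * cnj (c p' j)))"
      unfolding z_def by simp
    also have "\<dots> = (\<Sum>p<N. \<Sum>p'<N. c p i * cnj (c p' j) * (\<Sum>r<N. f p r * cnj (f p' r)))"
      unfolding sum_prod3 by (intro sum.cong refl) (simp add: sum_distrib_left ac_simps)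
    also have "\<dots> = (\<Sum>p<N. \<Sum>p'<N. c p i * cnj (c p' j) * (if p' = p then 1 else 0))"
      using fc unfolding orthonormal_rows_def by (intro sum.cong refl) auto
    also have "\<dots> = (\<Sum>p<N. c p i * cnj (c p j))"
      by (intro sum.cong refl) (simp add: sum_delta_mult)
    also have "\<dots> = \<omega> i j" using ens i j by simp
    finally show "\<omega> i j = (\<Sum>r<N. z r i * cnj (z r j))" by simp
  qed
qed

(* entropy of a mixture is at most the entropy of its ensemble: if \<omega> = \<Sum>_p c_p c_p^*, the
   spectrum of \<omega> has \<Sum> x log x at least that of the weights |c_p|^2 (which are the diagonal
   of the Gram matrix, and so are majorised by its spectrum) *)
lemma ensemble_xlogx_le_spectrum:
  fixes c :: "nat \<Rightarrow> nat \<Rightarrow> complex"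
  assumes W: "spectral_decomp n \<omega> \<mu> e"
    and ens: "\<forall>i<n. \<forall>j<n. \<omega> i j = (\<Sum>p<N. c p i * cnj (c p j))"
  shows "(\<Sum>p<N. xlogx (\<Sum>i<n. (cmod (c p i))\<^sup>2)) \<le> (\<Sum>k<n. xlogx (\<mu> k))"
proof -
  define G where "G = (\<lambda>p p'. \<Sum>i<n. cnj (c p i) * c p' i)"
  have "\<forall>p<N. \<forall>p'<N. G p p' = cnj (G p' p)" unfolding G_def by (simp add: mult.commute)
  then obtain \<gamma> f where Gdec: "spectral_decomp N G \<gamma> f" using spectral_decomp_exists by blast
  note z = gram_eigenvectors[OF Gdec G_def ens]
  have diag: "Re (qform N G (\<lambda>p'. fid p' p)) = (\<Sum>i<n. (cmod (c p i))\<^sup>2)" if "p < N" for p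
  proof -
    have "G p p = complex_of_real (\<Sum>i<n. (cmod (c p i))\<^sup>2)"
      unfolding G_def of_real_sum complex_norm_square by (simp add: mult.commute)
    thus ?thesis unfolding qform_fid[OF that] by simp
  qed
  have "\<forall>r<N. \<gamma> r \<ge> 0" using z(1)[rule_format, symmetric] by (simp add: sum_nonneg)
  hence "(\<Sum>p<N. xlogx (\<Sum>i<n. (cmod (c p i))\<^sup>2)) \<le> (\<Sum>r<N. xlogx (\<gamma> r))"
    using diagonal_xlogx_le_spectrum[OF orthonormal_cols_fid Gdec] diag by simp
  also have "\<dots> \<le> (\<Sum>k<n. xlogx (\<mu> k))" by (rule eigenfamily_xlogx_le[OF W z])
  finally show ?thesis .
qed

lemma sqrt_mult_cnj:
  "x \<ge> 0 \<Longrightarrow> complex_of_real (sqrt x) * a * cnj (complex_of_real (sqrt x) * b) = complex_of_real x * a * cnj b"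
  by (simp add: ac_simps flip: of_real_mult)

(* upper bound: S(t A1 + (1-t) A2) \<le> t S(A1) + (1-t) S(A2) + h2(t), phrased with \<Sum> x log x;
   the mixture is the ensemble of the 2n vectors sqrt(t l1_p) u1_p and sqrt((1-t) l2_p) u2_p *)
lemma mixture_xlogx_upper:
  fixes t :: real
  assumes t: "0 < t" "t < 1"
    and A1: "spectral_decomp n A1 l1 u1" and l1: "\<forall>r<n. l1 r \<ge> 0" "(\<Sum>r<n. l1 r) = 1"
    and A2: "spectral_decomp n A2 l2 u2" and l2: "\<forall>r<n. l2 r \<ge> 0" "(\<Sum>r<n. l2 r) = 1"
    and W: "spectral_decomp n \<omega> \<mu> e"
    and mix: "\<forall>i<n. \<forall>j<n. \<omega> i j = complex_of_real t * A1 i j + complex_of_real (1 - t) * A2 i j"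
  shows "t * (\<Sum>r<n. xlogx (l1 r)) + (1 - t) * (\<Sum>r<n. xlogx (l2 r)) + xlogx t + xlogx (1 - t)
           \<le> (\<Sum>k<n. xlogx (\<mu> k))"
proof -
  define c where "c = (\<lambda>p i. if p < n then complex_of_real (sqrt (t * l1 p)) * u1 i p
                         else complex_of_real (sqrt ((1 - t) * l2 (p - n))) * u2 i (p - n))"
  have c1: "c p i * cnj (c p j) = complex_of_real t * (complex_of_real (l1 p) * u1 i p * cnj (u1 j p))"
    and c2: "c (n + p) i * cnj (c (n + p) j) =
               complex_of_real (1 - t) * (complex_of_real (l2 p) * u2 i p * cnj (u2 j p))"
    if "p < n" for p i j
    using that sqrt_mult_cnj[of "t * l1 p"] sqrt_mult_cnj[of "(1 - t) * l2 p"] t l1 l2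
    unfolding c_def by (simp_all add: mult.assoc)
  have "\<forall>i<n. \<forall>j<n. \<omega> i j = (\<Sum>p<n + n. c p i * cnj (c p j))"
    using mix A1 A2 unfolding sum_lessThan_add spectral_decomp_def
    by (simp add: c1 c2 sum_distrib_left)
  from ensemble_xlogx_le_spectrum[OF W this]
  have "(\<Sum>p<n + n. xlogx (\<Sum>i<n. (cmod (c p i))\<^sup>2)) \<le> (\<Sum>k<n. xlogx (\<mu> k))" .
  moreover have "(\<Sum>i<n. (cmod (c p i))\<^sup>2) = t * l1 p" if p: "p < n" for p
  proof -
    have "(\<Sum>i<n. (cmod (c p i))\<^sup>2) = t * l1 p * (\<Sum>i<n. (cmod (u1 i p))\<^sup>2)"
      unfolding c_def sum_distrib_left using p l1 t by (intro sum.cong refl) (simp add: norm_mult power_mult_distrib)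
    thus ?thesis using orthonormal_cols_norm[OF _ p, of u1] A1 unfolding spectral_decomp_def by simp
  qed
  moreover have "(\<Sum>i<n. (cmod (c (n + p) i))\<^sup>2) = (1 - t) * l2 p" if p: "p < n" for p
  proof -
    have "(\<Sum>i<n. (cmod (c (n + p) i))\<^sup>2) = (1 - t) * l2 p * (\<Sum>i<n. (cmod (u2 i p))\<^sup>2)"
      unfolding c_def sum_distrib_left using p l2 t by (intro sum.cong refl) (simp add: norm_mult power_mult_distrib)
    thus ?thesis using orthonormal_cols_norm[OF _ p, of u2] A2 unfolding spectral_decomp_def by simp
  qed
  ultimately show ?thesis
    unfolding sum_lessThan_add using xlogx_sum_scale[of t n l1] xlogx_sum_scale[of "1 - t" n l2] t l1 l2
    by simp
qed

lemma mixture_xlogx_lower: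
  assumes W: "spectral_decomp n \<omega> \<mu> e" and tr: "(\<Sum>i<n. \<omega> i i) = 1"
    and A: "spectral_decomp n A l u" and l0: "\<forall>r<n. l r \<ge> 0" and l1: "(\<Sum>r<n. l r) = 1"
    and q0: "q \<ge> 0" and dom: "\<forall>x. q * Re (qform n A x) \<le> Re (qform n \<omega> x)"
  shows "(\<Sum>k<n. xlogx (\<mu> k)) \<le> q * (\<Sum>r<n. xlogx (l r))"
proof -
  have e: "orthonormal_cols n e" using W unfolding spectral_decomp_def by blast
  define d where "d = (\<lambda>k. Re (qform n A (\<lambda>i. e i k)))"
  have mu_ge: "q * d k \<le> \<mu> k" if "k < n" for k
    using dom spectral_eigval[OF W that] unfolding d_def by (metis Re_complex_of_real)
  have d0: "d k \<ge> 0" for k unfolding d_def spectral_qform[OF A] using l0 by (auto intro!: sum_nonneg)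
  have mu1: "(\<Sum>k<n. \<mu> k) = 1"
    using spectral_trace[OF W] tr by (metis of_real_eq_1_iff)
  have "(\<Sum>k<n. qform n A (\<lambda>i. e i k)) = complex_of_real (\<Sum>r<n. l r)"
    using trace_in_basis[OF orthonormal_cols_rows[OF e]] spectral_trace[OF A] by simp
  hence d1: "(\<Sum>k<n. d k) = 1" unfolding d_def l1 by (simp flip: Re_sum)
  have q1: "q \<le> 1"
  proof -
    have "(\<Sum>k<n. q * d k) \<le> (\<Sum>k<n. \<mu> k)" by (rule sum_mono) (use mu_ge in auto)
    thus ?thesis using mu1 d1 by (simp add: sum_distrib_left[symmetric])
  qed
  have rest: "(\<Sum>k<n. \<mu> k - q * d k) = 1 - q"
    using mu1 d1 by (simp add: sum_subtractf sum_distrib_left[symmetric])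
  have "xlogx (\<mu> k) \<le> q * xlogx (d k)" if k: "k < n" for k
  proof -
    have "\<mu> k - q * d k \<le> (\<Sum>k<n. \<mu> k - q * d k)"
      by (rule member_le_sum) (use k mu_ge in auto)
    hence "\<mu> k - q * d k \<le> 1 - q" using rest by simp
    from xlogx_dominated[OF q0 q1 d0[of k] _ this] show ?thesis using mu_ge[OF k] by simp
  qed
  hence "(\<Sum>k<n. xlogx (\<mu> k)) \<le> q * (\<Sum>k<n. xlogx (d k))"
    unfolding sum_distrib_left by (intro sum_mono) auto
  also have "\<dots> \<le> q * (\<Sum>r<n. xlogx (l r))"
    using diagonal_xlogx_le_spectrum[OF e A l0] q0 unfolding d_def by (rule mult_left_mono)
  finally show ?thesis .
qed

lemma index_pair_bound: "i < n \<Longrightarrow> j < m \<Longrightarrow> i * m + j < n * (m::nat)"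
proof -
  assume "i < n" "j < m"
  hence "i * m + j < Suc i * m" by simp
  also have "\<dots> \<le> n * m" using \<open>i < n\<close> by (intro mult_le_mono1) simp
  finally show ?thesis .
qed

lemma sum_index_pairs:
  "(\<Sum>i<(n::nat). \<Sum>j<(m::nat). f (i * m + j)) = (\<Sum>l<n * m. f l :: 'a :: comm_monoid_add)"
proof (induction n)
  case 0 thus ?case by simp
next
  case (Suc n)
  have "(\<Sum>l<Suc n * m. f l) = (\<Sum>l<n * m + m. f l)" by (simp add: add.commute)
  also have "\<dots> = (\<Sum>l<n * m. f l) + (\<Sum>j<m. f (n * m + j))" by (rule sum_lessThan_add)
  finally show ?case using Suc by simp
qed

definition reduced_state :: "nat \<Rightarrow> nat \<Rightarrow> complex vec \<Rightarrow> nat \<Rightarrow> nat \<Rightarrow> complex" where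
  "reduced_state n m v = (\<lambda>i i'. partial_trace_B n m (ket_bra v) $$ (i,i'))"

(* the partial contraction (<x| \<otimes> 1)|v> *)
definition contract :: "nat \<Rightarrow> nat \<Rightarrow> complex vec \<Rightarrow> (nat \<Rightarrow> complex) \<Rightarrow> nat \<Rightarrow> complex" where
  "contract n m v x j = (\<Sum>i<n. cnj (x i) * v $ (i * m + j))"

lemma reduced_state_entry:
  assumes "dim_vec v = n * m" "i < n" "i' < n"
  shows "reduced_state n m v i i' = (\<Sum>j<m. v $ (i * m + j) * cnj (v $ (i' * m + j)))"
  using assms index_pair_bound[of i n _ m] index_pair_bound[of i' n _ m]
  unfolding reduced_state_def partial_trace_B_def ket_bra_def by (auto intro!: sum.cong)

lemma reduced_state_hermitian:
  "dim_vec v = n * m \<Longrightarrow> i < n \<Longrightarrow> j < n \<Longrightarrow> cnj (reduced_state n m v j i) = reduced_state n m v i j"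
  by (simp add: reduced_state_entry mult.commute)

lemma reduced_state_qform:
  assumes "dim_vec v = n * m"
  shows "qform n (reduced_state n m v) x = complex_of_real (\<Sum>j<m. (cmod (contract n m v x j))\<^sup>2)"
proof -
  have "qform n (reduced_state n m v) x =
        (\<Sum>i<n. \<Sum>i'<n. \<Sum>j<m. cnj (x i) * v $ (i * m + j) * (cnj (v $ (i' * m + j)) * x i'))"
    unfolding qform_def using reduced_state_entry[OF assms]
    by (auto intro!: sum.cong simp: sum_distrib_left sum_distrib_right mult.assoc)
  also have "\<dots> = (\<Sum>j<m. \<Sum>i<n. \<Sum>i'<n. cnj (x i) * v $ (i * m + j) * (cnj (v $ (i' * m + j)) * x i'))"
    by (subst sum_swap3, subst sum_swap3) (rule refl)
  also have "\<dots> = (\<Sum>j<m. (\<Sum>i<n. cnj (x i) * v $ (i * m + j)) * (\<Sum>i'<n. cnj (v $ (i' * m + j)) * x i'))"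
    by (simp add: sum_product)
  also have "\<dots> = (\<Sum>j<m. contract n m v x j * cnj (contract n m v x j))"
    unfolding contract_def by (simp add: mult.commute)
  also have "\<dots> = complex_of_real (\<Sum>j<m. (cmod (contract n m v x j))\<^sup>2)"
    unfolding of_real_sum complex_norm_square ..
  finally show ?thesis .
qed

lemma reduced_state_trace:
  assumes "dim_vec v = n * m"
  shows "(\<Sum>i<n. reduced_state n m v i i) = complex_of_real (sq_norm_vec v)"
proof -
  have "(\<Sum>i<n. reduced_state n m v i i) = (\<Sum>i<n. \<Sum>j<m. v $ (i * m + j) * cnj (v $ (i * m + j)))"
    using reduced_state_entry[OF assms] by (intro sum.cong refl) simp
  also have "\<dots> = (\<Sum>l<n * m. v $ l * cnj (v $ l))" by (rule sum_index_pairs)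
  also have "\<dots> = complex_of_real (sq_norm_vec v)"
    unfolding sq_norm_vec_def assms of_real_sum complex_norm_square ..
  finally show ?thesis .
qed

lemma reduced_state_spectral:
  assumes dv: "dim_vec v = n * m" and uv: "unit_vec v"
  shows "\<exists>l u. spectral_decomp n (reduced_state n m v) l u \<and>
     entanglement n m v = - (\<Sum>r<n. xlogx (l r)) \<and> (\<forall>r<n. l r \<ge> 0) \<and> (\<Sum>r<n. l r) = 1"
proof -
  have "partial_trace_B n m (ket_bra v) \<in> carrier_mat n n" unfolding partial_trace_B_def by simp
  from hermitian_spectral[OF this] obtain l u
    where dec: "spectral_decomp n (reduced_state n m v) l u"
      and ent: "entanglement n m v = - (\<Sum>r<n. xlogx (l r))"
    using reduced_state_hermitian[OF dv]
    unfolding entanglement_def reduced_state_def by (metis complex_cnj_cnj)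
  have "l r \<ge> 0" if "r < n" for r
    using spectral_eigval[OF dec that] reduced_state_qform[OF dv, of "\<lambda>i. u i r"]
    by (metis Re_complex_of_real sum_nonneg zero_le_power2)
  moreover have "(\<Sum>r<n. l r) = 1"
    using spectral_trace[OF dec] reduced_state_trace[OF dv] uv unfolding unit_vec_def
    by (metis of_real_eq_1_iff)
  ultimately show ?thesis using dec ent by blast
qed

lemma weighted_square_bound:
  fixes t A x y :: real
  assumes t: "0 < t" "t < 1" and A: "A > 0"
  shows "t * (1 - t) * (x + y)\<^sup>2 \<le> (1 - t + t * A) * (t * x\<^sup>2 + (1 - t) * y\<^sup>2 / A)"
proof -
  have "A * ((1 - t + t * A) * (t * x\<^sup>2 + (1 - t) * y\<^sup>2 / A) - t * (1 - t) * (x + y)\<^sup>2)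
        = ((1 - t) * y - t * A * x)\<^sup>2"
    using A by (simp add: field_simps power2_eq_square)
  hence "(1 - t + t * A) * (t * x\<^sup>2 + (1 - t) * y\<^sup>2 / A) - t * (1 - t) * (x + y)\<^sup>2 \<ge> 0"
    using A by (metis zero_le_mult_iff zero_le_power2 not_less)
  thus ?thesis by simp
qed

lemma superposition_amplitude_bound:
  fixes \<alpha> \<beta> a b g :: complex and t :: real
  assumes t: "0 < t" "t < 1" and g: "g = \<alpha> * a + \<beta> * b"
  shows "t * (1 - t) / (1 - t * (1 - (cmod \<alpha>)\<^sup>2)) * (cmod \<beta>)\<^sup>2 * (cmod b)\<^sup>2
           \<le> t * (cmod g)\<^sup>2 + (1 - t) * (cmod a)\<^sup>2"
proof (cases "\<alpha> = 0")
  case True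
  hence "(cmod g)\<^sup>2 = (cmod \<beta>)\<^sup>2 * (cmod b)\<^sup>2" using g by (simp add: norm_mult power_mult_distrib)
  thus ?thesis using True t by simp
next
  case False
  define A where "A = (cmod \<alpha>)\<^sup>2"
  have A: "A > 0" unfolding A_def using False by simp
  define x where "x = cmod g"
  define y where "y = cmod \<alpha> * cmod a"
  have "cmod \<beta> * cmod b = cmod (g - \<alpha> * a)" using g by (simp add: norm_mult)
  also have "\<dots> \<le> x + y" unfolding x_def y_def by (metis norm_mult norm_triangle_ineq4)
  finally have bb: "(cmod \<beta>)\<^sup>2 * (cmod b)\<^sup>2 \<le> (x + y)\<^sup>2"
    by (metis power_mult_distrib power_mono norm_ge_zero mult_nonneg_nonneg)
  have D: "1 - t * (1 - A) = 1 - t + t * A" by (simp add: algebra_simps)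
  have Dp: "1 - t + t * A > 0" using t A by (simp add: add_pos_nonneg)
  have "t * (1 - t) / (1 - t * (1 - A)) * ((cmod \<beta>)\<^sup>2 * (cmod b)\<^sup>2)
      \<le> t * (1 - t) / (1 - t + t * A) * (x + y)\<^sup>2"
    unfolding D using bb t Dp by (intro mult_left_mono) auto
  also have "\<dots> \<le> t * x\<^sup>2 + (1 - t) * y\<^sup>2 / A"
    using weighted_square_bound[OF t A, of x y] Dp by (simp add: divide_le_eq mult.commute)
  finally have "t * (1 - t) / (1 - t * (1 - A)) * ((cmod \<beta>)\<^sup>2 * (cmod b)\<^sup>2)
      \<le> t * x\<^sup>2 + (1 - t) * y\<^sup>2 / A" .
  moreover have "(1 - t) * y\<^sup>2 / A = (1 - t) * (cmod a)\<^sup>2"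
    unfolding y_def A_def using False by (simp add: power_mult_distrib)
  ultimately show ?thesis unfolding A_def x_def by (simp add: mult.assoc)
qed

lemma reduced_mixture_dominance:
  fixes \<Psi> \<Phi> :: "complex vec" and \<alpha> \<beta> :: complex and t :: real
  assumes dP: "dim_vec \<Psi> = n * m" and dF: "dim_vec \<Phi> = n * m" and t: "0 < t" "t < 1"
  shows "t * (1 - t) / (1 - t * (1 - (cmod \<alpha>)\<^sup>2)) * (cmod \<beta>)\<^sup>2 * Re (qform n (reduced_state n m \<Phi>) x)
     \<le> t * Re (qform n (reduced_state n m (\<alpha> \<cdot>\<^sub>v \<Psi> + \<beta> \<cdot>\<^sub>v \<Phi>)) x)
        + (1 - t) * Re (qform n (reduced_state n m \<Psi>) x)"
proof -
  define \<Gamma> where "\<Gamma> = \<alpha> \<cdot>\<^sub>v \<Psi> + \<beta> \<cdot>\<^sub>v \<Phi>"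
  have dG: "dim_vec \<Gamma> = n * m" unfolding \<Gamma>_def using dP dF by simp
  have lin: "contract n m \<Gamma> x j = \<alpha> * contract n m \<Psi> x j + \<beta> * contract n m \<Phi> x j"
    if j: "j < m" for j
    using dP dF index_pair_bound[OF _ j, of _ n] unfolding contract_def \<Gamma>_def
    by (simp add: sum_distrib_left sum.distrib algebra_simps)
  show ?thesis
    unfolding \<Gamma>_def[symmetric] reduced_state_qform[OF dG] reduced_state_qform[OF dP]
      reduced_state_qform[OF dF] Re_complex_of_real sum_distrib_left sum.distrib[symmetric]
    by (rule sum_mono) (use superposition_amplitude_bound[OF t lin] in auto)
qed

lemma h2_xlogx: "0 < t \<Longrightarrow> t < 1 \<Longrightarrow> h2 t = - (xlogx t + xlogx (1 - t))"
  unfolding h2_def xlogx_def by simp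

lemma entanglement_superposition_bound:
  fixes \<Psi> \<Phi> :: "complex vec" and \<alpha> \<beta> :: complex and t :: real
  assumes dP: "dim_vec \<Psi> = n * m" and dF: "dim_vec \<Phi> = n * m"
    and uP: "unit_vec \<Psi>" and uF: "unit_vec \<Phi>" and uG: "unit_vec (\<alpha> \<cdot>\<^sub>v \<Psi> + \<beta> \<cdot>\<^sub>v \<Phi>)"
    and t: "0 < t" "t < 1"
  shows "entanglement n m (\<alpha> \<cdot>\<^sub>v \<Psi> + \<beta> \<cdot>\<^sub>v \<Phi>) \<ge>
     (1 - t) * (cmod \<beta>)\<^sup>2 / (1 - t * (1 - (cmod \<alpha>)\<^sup>2)) * entanglement n m \<Phi>
       - (1 - t) / t * entanglement n m \<Psi> - 1 / t * h2 t"
proof -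
  define \<Gamma> where "\<Gamma> = \<alpha> \<cdot>\<^sub>v \<Psi> + \<beta> \<cdot>\<^sub>v \<Phi>"
  have dG: "dim_vec \<Gamma> = n * m" unfolding \<Gamma>_def using dP dF by simp
  obtain lG uG where G: "spectral_decomp n (reduced_state n m \<Gamma>) lG uG"
    and EG: "entanglement n m \<Gamma> = - (\<Sum>r<n. xlogx (lG r))" and lG: "\<forall>r<n. lG r \<ge> 0" "(\<Sum>r<n. lG r) = 1"
    using reduced_state_spectral[OF dG uG[folded \<Gamma>_def]] by blast
  obtain lP uP where P: "spectral_decomp n (reduced_state n m \<Psi>) lP uP"
    and EP: "entanglement n m \<Psi> = - (\<Sum>r<n. xlogx (lP r))" and lP: "\<forall>r<n. lP r \<ge> 0" "(\<Sum>r<n. lP r) = 1"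
    using reduced_state_spectral[OF dP uP] by blast
  obtain lF uF where F: "spectral_decomp n (reduced_state n m \<Phi>) lF uF"
    and EF: "entanglement n m \<Phi> = - (\<Sum>r<n. xlogx (lF r))" and lF: "\<forall>r<n. lF r \<ge> 0" "(\<Sum>r<n. lF r) = 1"
    using reduced_state_spectral[OF dF uF] by blast
  define \<omega> where "\<omega> = (\<lambda>i j. complex_of_real t * reduced_state n m \<Gamma> i j
                             + complex_of_real (1 - t) * reduced_state n m \<Psi> i j)"
  have "\<forall>i<n. \<forall>j<n. \<omega> i j = cnj (\<omega> j i)"
    using reduced_state_hermitian[OF dG] reduced_state_hermitian[OF dP] unfolding \<omega>_def by simp
  then obtain \<mu> e where W: "spectral_decomp n \<omega> \<mu> e" using spectral_decomp_exists by blast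
  have upper: "t * (\<Sum>r<n. xlogx (lG r)) + (1 - t) * (\<Sum>r<n. xlogx (lP r)) + xlogx t + xlogx (1 - t)
      \<le> (\<Sum>k<n. xlogx (\<mu> k))"
    by (rule mixture_xlogx_upper[OF t G lG P lP W]) (simp add: \<omega>_def)
  define q where "q = t * (1 - t) / (1 - t * (1 - (cmod \<alpha>)\<^sup>2)) * (cmod \<beta>)\<^sup>2"
  have "1 - t * (1 - (cmod \<alpha>)\<^sup>2) = (1 - t) + t * (cmod \<alpha>)\<^sup>2" by (simp add: algebra_simps)
  also have "\<dots> > 0" using t by (simp add: add_pos_nonneg)
  finally have q0: "q \<ge> 0" unfolding q_def using t by simp
  have dom: "\<forall>x. q * Re (qform n (reduced_state n m \<Phi>) x) \<le> Re (qform n \<omega> x)"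
    using reduced_mixture_dominance[OF dP dF t] unfolding q_def \<Gamma>_def \<omega>_def qform_lincomb by simp
  have "(\<Sum>i<n. \<omega> i i) = 1"
    using reduced_state_trace[OF dG] reduced_state_trace[OF dP] uG uP
    unfolding \<omega>_def \<Gamma>_def unit_vec_def by (simp add: sum.distrib sum_distrib_left[symmetric])
  from mixture_xlogx_lower[OF W this F lF q0 dom]
  have lower: "(\<Sum>k<n. xlogx (\<mu> k)) \<le> q * (\<Sum>r<n. xlogx (lF r))" .
  have "t * entanglement n m \<Gamma> \<ge> q * entanglement n m \<Phi> - (1 - t) * entanglement n m \<Psi> - h2 t"
    unfolding EG EF EP h2_xlogx[OF t] using upper lower by (simp add: algebra_simps)
  hence "entanglement n m \<Gamma> \<ge> (q * entanglement n m \<Phi> - (1 - t) * entanglement n m \<Psi> - h2 t) / t"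
    using t by (simp add: divide_le_eq mult.commute)
  also have "(q * entanglement n m \<Phi> - (1 - t) * entanglement n m \<Psi> - h2 t) / t =
     (1 - t) * (cmod \<beta>)\<^sup>2 / (1 - t * (1 - (cmod \<alpha>)\<^sup>2)) * entanglement n m \<Phi>
       - (1 - t) / t * entanglement n m \<Psi> - 1 / t * h2 t"
    unfolding q_def using t by (simp add: field_simps)
  finally show ?thesis unfolding \<Gamma>_def .
qed

theorem theorem4:
  fixes dA dB :: nat and \<Psi> \<Phi> :: "complex vec" and \<alpha> \<beta> :: complex and t :: real
  assumes "dim_vec \<Psi> = dA * dB" and "dim_vec \<Phi> = dA * dB"
    and "unit_vec \<Psi>" and "unit_vec \<Phi>"
    and "unit_vec (\<alpha> \<cdot>\<^sub>v \<Psi> + \<beta> \<cdot>\<^sub>v \<Phi>)"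
    and "0 < t" and "t < 1"
  shows "entanglement dA dB (\<alpha> \<cdot>\<^sub>v \<Psi> + \<beta> \<cdot>\<^sub>v \<Phi>) \<ge>
    max ((1 - t) * (cmod \<beta>)\<^sup>2 / (1 - t * (1 - (cmod \<alpha>)\<^sup>2)) * entanglement dA dB \<Phi>
           - (1 - t) / t * entanglement dA dB \<Psi> - 1 / t * h2 t)
        ((1 - t) * (cmod \<alpha>)\<^sup>2 / (1 - t * (1 - (cmod \<beta>)\<^sup>2)) * entanglement dA dB \<Psi>
           - (1 - t) / t * entanglement dA dB \<Phi> - 1 / t * h2 t)"
proof -
  \<comment> \<open>L_2 is L_1 with the roles of (\<alpha>, \<Psi>) and (\<beta>, \<Phi>) exchanged\<close>
  have swap: "\<alpha> \<cdot>\<^sub>v \<Psi> + \<beta> \<cdot>\<^sub>v \<Phi> = \<beta> \<cdot>\<^sub>v \<Phi> + \<alpha> \<cdot>\<^sub>v \<Psi>"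
    by (rule comm_add_vec[of _ "dA * dB"]) (use assms(1,2) in \<open>auto intro: carrier_vecI\<close>)
  have L1: "entanglement dA dB (\<alpha> \<cdot>\<^sub>v \<Psi> + \<beta> \<cdot>\<^sub>v \<Phi>) \<ge>
     (1 - t) * (cmod \<beta>)\<^sup>2 / (1 - t * (1 - (cmod \<alpha>)\<^sup>2)) * entanglement dA dB \<Phi>
       - (1 - t) / t * entanglement dA dB \<Psi> - 1 / t * h2 t"
    by (rule entanglement_superposition_bound[OF assms])
  have L2: "entanglement dA dB (\<beta> \<cdot>\<^sub>v \<Phi> + \<alpha> \<cdot>\<^sub>v \<Psi>) \<ge>
     (1 - t) * (cmod \<alpha>)\<^sup>2 / (1 - t * (1 - (cmod \<beta>)\<^sup>2)) * entanglement dA dB \<Psi>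
       - (1 - t) / t * entanglement dA dB \<Phi> - 1 / t * h2 t"
    by (rule entanglement_superposition_bound) (use assms swap in auto)
  show ?thesis using L1 L2 swap by simp
qed

end
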